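(* For a positive integer $g$, let $t_g$ denote the number of numerical semigroups $\Lambda$ of genus $g$ satisfying $f(\Lambda) < 3m(\Lambda)$. Let $\varphi = \frac{1+\sqrt5}{2}$. Then \[ \lim_{g \to \infty} t_g \varphi^{-g} = \frac{\varphi}{\sqrt 5} + \frac{1}{\sqrt 5} \sum_{k = 1}^{\infty} \sum_{A \in \mathcal A_k} \varphi^{ - |(A + A)\cap[0, k]| + |A| - k - 1}. \]
   Context: A numerical semigroup is a subset $\Lambda\subseteq\mathbb{N}_0$ closed under addition, containing $0$, with finite complement in $\mathbb{N}_0$. Its genus $g(\Lambda)$ is $|\mathbb{N}_0\setminus\Lambda|$, its multiplicity $m(\Lambda)$ is its smallest nonzero element, and its Frobenius number $f(\Lambda)$ is the largest element of $\mathbb{N}_0\setminus\Lambda$. For integers $a\le b$, $[a,b]=\{a,a+1,\dots,b\}$. For $A\subseteq\mathbb{Z}$, $A+A=\{a_1+a_2: a_1,a_2\in A\}$. For a positive integer $k$, $\mathcal A_k = \{A \subseteq [0, k-1] : 0 \in A \text{ and } k \notin A + A\}$. *)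

theory Defs
  imports "HOL-Analysis.Analysis"
begin

definition numerical_semigroup :: "nat set \<Rightarrow> bool" where
  "numerical_semigroup S \<longleftrightarrow> 0 \<in> S \<and> (\<forall>a\<in>S. \<forall>b\<in>S. a + b \<in> S) \<and> finite (UNIV - S)"

definition genus :: "nat set \<Rightarrow> nat" where
  "genus S = card (UNIV - S)"

definition multiplicity :: "nat set \<Rightarrow> nat" where
  "multiplicity S = (LEAST x. x \<in> S \<and> x \<noteq> 0)"

text \<open>Frobenius number: largest gap (only meaningful when the gap set is nonempty).\<close>
definition frobenius :: "nat set \<Rightarrow> nat" where
  "frobenius S = Max (UNIV - S)"

definition sumset :: "int set \<Rightarrow> int set" where
  "sumset A = {a1 + a2 | a1 a2. a1 \<in> A \<and> a2 \<in> A}"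

definition calA :: "nat \<Rightarrow> int set set" where
  "calA k = {A. A \<subseteq> {0..int k - 1} \<and> 0 \<in> A \<and> int k \<notin> sumset A}"

definition t_count :: "nat \<Rightarrow> nat" where
  "t_count g = card {S. numerical_semigroup S \<and> genus S = g \<and> frobenius S < 3 * multiplicity S}"

end

theory Submission
  imports Defs "HOL-Number_Theory.Fib"
begin

text \<open>A numerical semigroup \<open>S\<close> of multiplicity \<open>m\<close> with \<open>f(S) < 3m\<close> is determined by the sets
  \<open>A, B \<subseteq> [0, m)\<close> with \<open>S \<inter> [m, 2m) = m + A\<close> and \<open>S \<inter> [2m, 3m) = 2m + B\<close>; the only constraints are
  \<open>0 \<in> A\<close> and \<open>(A + A) \<inter> [0, m) \<subseteq> B\<close>, and the genus is \<open>(m - 1) + (m - |A|) + (m - |B|)\<close>.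
  The triples with \<open>B = [0, m)\<close> are counted by \<open>fib (g + 1)\<close>. Otherwise let \<open>k\<close> be the largest
  element of \<open>[0, m) - B\<close>: then \<open>A \<inter> [0, k)\<close> lies in \<open>\<A>\<^sub>k\<close>, while the elements of \<open>A\<close> above
  \<open>k\<close> and the gaps of \<open>B\<close> below \<open>k\<close> are free. Summing over them gives a binomial convolution
  of Fibonacci numbers which, divided by \<open>\<phi> ^ g\<close>, tends to the \<open>k\<close>-th term of the series divided
  by \<open>\<surd>5\<close>. A transfer-matrix argument bounds the sum of \<open>\<phi> powr (|A| - |(A + A) \<inter> [0, k]|)\<close>
  over \<open>A \<in> \<A>\<^sub>k\<close> by \<open>1 + k (13/5) ^ \<lceil>k/2\<rceil>\<close>; as \<open>13/5 < \<phi>\<^sup>2\<close>, this makes the series converge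
  and dominates its terms uniformly in \<open>g\<close>, so Tannery's theorem exchanges limit and sum.\<close>

section \<open>Sumsets of natural numbers\<close>

definition sumset_nat :: "nat set \<Rightarrow> nat set" where
  "sumset_nat A = {a + b | a b. a \<in> A \<and> b \<in> A}"

definition calA_nat :: "nat \<Rightarrow> nat set set" where
  "calA_nat k = {A. A \<subseteq> {..<k} \<and> 0 \<in> A \<and> k \<notin> sumset_nat A}"

definition sumset_count :: "nat \<Rightarrow> nat set \<Rightarrow> nat" where
  "sumset_count k A = card (sumset_nat A \<inter> {..k})"

lemma sumset_natI: "a \<in> A \<Longrightarrow> b \<in> A \<Longrightarrow> a + b \<in> sumset_nat A"
  unfolding sumset_nat_def by blast

lemma sumset_nat_mono: "A \<subseteq> B \<Longrightarrow> sumset_nat A \<subseteq> sumset_nat B"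
  unfolding sumset_nat_def by blast

lemma finite_calA_nat: "finite (calA_nat k)"
  by (rule finite_subset[of _ "Pow {..<k}"]) (auto simp: calA_nat_def)

lemma calA_nat_subset_sumset: "A \<in> calA_nat k \<Longrightarrow> A \<subseteq> sumset_nat A \<inter> {..k}"
  unfolding calA_nat_def using sumset_natI[of 0 A] by force

lemma card_le_sumset_count: "A \<in> calA_nat k \<Longrightarrow> card A \<le> sumset_count k A"
  unfolding sumset_count_def by (rule card_mono) (auto dest: calA_nat_subset_sumset)

lemma sumset_count_le: "A \<in> calA_nat k \<Longrightarrow> sumset_count k A \<le> k"
proof -
  assume "A \<in> calA_nat k"
  then have "sumset_nat A \<inter> {..k} \<subseteq> {..<k}" unfolding calA_nat_def by (auto simp: le_less)
  then show ?thesis unfolding sumset_count_def using card_mono[of "{..<k}"] by fastforce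
qed

lemma calA_nat_complement_notin: "A \<in> calA_nat k \<Longrightarrow> a \<in> A \<Longrightarrow> k - a \<notin> A"
  unfolding calA_nat_def using sumset_natI[of a A "k - a"] by auto

lemma sumset_image_int: "sumset (int ` A) = int ` sumset_nat A"
  unfolding sumset_def sumset_nat_def by force

lemma calA_eq_image_calA_nat: "calA k = (\<lambda>A. int ` A) ` calA_nat k"
proof (intro set_eqI iffI)
  fix B assume "B \<in> calA k"
  then have B: "B \<subseteq> {0..int k - 1}" "0 \<in> B" "int k \<notin> sumset B" unfolding calA_def by auto
  have B_eq: "B = int ` nat ` B"
    unfolding image_image using B(1) by (force intro: image_eqI)
  have "nat ` B \<in> calA_nat k"
    unfolding calA_nat_def using B sumset_image_int[of "nat ` B"] by (subst (asm) B_eq[symmetric]) force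
  with B_eq show "B \<in> (\<lambda>A. int ` A) ` calA_nat k" by blast
next
  fix B assume "B \<in> (\<lambda>A. int ` A) ` calA_nat k"
  then obtain A where "A \<in> calA_nat k" "B = int ` A" by auto
  then show "B \<in> calA k"
    unfolding calA_def calA_nat_def using sumset_image_int[of A] by force
qed

lemma card_sumset_image_int: "card (sumset (int ` A) \<inter> {0..int k}) = sumset_count k A"
proof -
  have "sumset (int ` A) \<inter> {0..int k} = int ` (sumset_nat A \<inter> {..k})"
    unfolding sumset_image_int by auto
  then show ?thesis unfolding sumset_count_def by (simp add: card_image)
qed

section \<open>Convergence of the series\<close>

lemma sum_PiE_lessThan_Suc:
  assumes "\<And>x. finite (B x)"
  shows "(\<Sum>g\<in>PiE {..<Suc n} B. f g) = (\<Sum>g\<in>PiE {..<n} B. \<Sum>y\<in>B n. f (g(n := y)))"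
proof -
  have "(\<Sum>g\<in>PiE {..<Suc n} B. f g) = (\<Sum>(y, g)\<in>B n \<times> PiE {..<n} B. f (g(n := y)))"
    by (intro sum.reindex_bij_witness[of _ "\<lambda>(y, g). g(n := y)" "\<lambda>g. (g n, g(n := undefined))"])
       (auto simp: PiE_def extensional_def lessThan_Suc)
  also have "\<dots> = (\<Sum>g\<in>PiE {..<n} B. \<Sum>y\<in>B n. f (g(n := y)))"
    by (subst sum.cartesian_product[symmetric]) (rule sum.swap)
  finally show ?thesis .
qed

text \<open>A set \<open>A \<in> \<A>\<^sub>k\<close> is encoded by a state for each \<open>x < k/2\<close>: \<open>1\<close> if \<open>x \<in> A\<close>, \<open>2\<close> if
  \<open>k - x \<in> A\<close>, and \<open>0\<close> otherwise (see \<open>pair_state\<close> below). With \<open>d\<close> the least positive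
  element of \<open>A\<close>, transitions link the states at \<open>x - d\<close> and \<open>x\<close>, and \<open>allowed_states d\<close>
  records \<open>0 \<in> A\<close> and \<open>A \<inter> [1, d) = {}\<close>. Carrying the \<open>boundary_weight\<close> of the last \<open>d\<close>
  states, on which later transitions depend, turns the transfer estimate into an induction on \<open>n\<close>.\<close>

definition transition_cost :: "nat \<Rightarrow> nat \<Rightarrow> nat" where
  "transition_cost p q = (if p = 1 \<and> q \<noteq> 1 then 1 else 0) + (if q = 2 \<and> p \<noteq> 2 then 1 else 0)"

definition state_weight :: "nat \<Rightarrow> real" where
  "state_weight t = (if t = 0 then 23/20 else if t = 1 then 1 else 27/20)"

definition allowed_states :: "nat \<Rightarrow> nat \<Rightarrow> nat set" where
  "allowed_states d x = {t. t \<le> 2 \<and> (x = 0 \<longrightarrow> t = 1) \<and> (1 \<le> x \<and> x < d \<longrightarrow> t \<noteq> 1)}"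

definition path_weight :: "real \<Rightarrow> nat \<Rightarrow> nat \<Rightarrow> (nat \<Rightarrow> nat) \<Rightarrow> real" where
  "path_weight r d n st = (\<Prod>x\<in>{d..<n}. r ^ transition_cost (st (x - d)) (st x))"

definition boundary_weight :: "nat \<Rightarrow> nat \<Rightarrow> (nat \<Rightarrow> nat) \<Rightarrow> real" where
  "boundary_weight d n st = (\<Prod>y\<in>{n - d..<n}. state_weight (st y))"

lemma finite_allowed_states: "finite (allowed_states d x)"
  unfolding allowed_states_def by (rule finite_subset[of _ "{..2}"]) auto

lemma state_weight_ge_1: "1 \<le> state_weight t"
  by (simp add: state_weight_def)

text \<open>The state weights form an approximate Perron eigenvector of the \<open>3 \<times> 3\<close> matrix
  \<open>(r ^ transition_cost p t)\<close>, whose spectral radius is therefore at most \<open>13/5\<close>.\<close>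

lemma transition_sum_le:
  fixes r :: real
  assumes "0 \<le> r" and "r \<le> 6181/10000" and "p \<le> 2"
  shows "(\<Sum>t\<in>{0, 1, 2}. r ^ transition_cost p t * state_weight t) \<le> 13/5 * state_weight p"
proof -
  have "r * r \<le> r" using assms by (simp add: mult_left_le)
  then show ?thesis using assms
    by (auto simp: transition_cost_def state_weight_def numeral_2_eq_2 le_Suc_eq power2_eq_square)
qed

lemma allowed_transition_sum_le:
  fixes r :: real
  assumes "0 \<le> r" and "r \<le> 6181/10000" and "p \<le> 2" and "1 \<le> d"
  shows "(\<Sum>t\<in>allowed_states d n. (if d \<le> n then r ^ transition_cost p t else 1) * state_weight t)
    \<le> 13/5 * (if d \<le> n then state_weight p else 1)"
proof (cases "d \<le> n")
  case True
  then have "allowed_states d n = {0, 1, 2}" using assms unfolding allowed_states_def by auto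
  then show ?thesis using True transition_sum_le[OF assms(1-3)] by simp
next
  case False
  then have "allowed_states d n = (if n = 0 then {1} else {0, 2})"
    unfolding allowed_states_def by auto
  then show ?thesis using False by (simp add: state_weight_def)
qed

lemma path_weight_update:
  assumes "1 \<le> d"
  shows "path_weight r d (Suc n) (st(n := t))
    = path_weight r d n st * (if d \<le> n then r ^ transition_cost (st (n - d)) t else 1)"
proof -
  have "path_weight r d n (st(n := t)) = path_weight r d n st"
    unfolding path_weight_def using assms by (intro prod.cong) auto
  moreover have "{d..<Suc n} = (if d \<le> n then insert n {d..<n} else {d..<n})" by auto
  moreover have "n - d \<noteq> n" if "d \<le> n" using assms that by simp
  ultimately show ?thesis using assms by (simp add: path_weight_def mult.commute)
qed

lemma boundary_weight_update:
  assumes "1 \<le> d"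
  shows "boundary_weight d (Suc n) (st(n := t))
    = boundary_weight d n st * state_weight t / (if d \<le> n then state_weight (st (n - d)) else 1)"
proof -
  let ?R = "\<Prod>y\<in>{Suc n - d..<n}. state_weight (st y)"
  have "{Suc n - d..<Suc n} = insert n {Suc n - d..<n}" using assms by auto
  moreover have "(\<Prod>y\<in>{Suc n - d..<n}. state_weight ((st(n := t)) y)) = ?R" by (intro prod.cong) auto
  ultimately have new: "boundary_weight d (Suc n) (st(n := t)) = ?R * state_weight t"
    by (simp add: boundary_weight_def mult.commute)
  have "{n - d..<n} = (if d \<le> n then insert (n - d) {Suc n - d..<n} else {Suc n - d..<n})"
    using assms by auto
  then have "boundary_weight d n st = (if d \<le> n then state_weight (st (n - d)) else 1) * ?R"
    using assms by (simp add: boundary_weight_def)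
  moreover have "state_weight x \<noteq> 0" for x using state_weight_ge_1[of x] by simp
  ultimately show ?thesis unfolding new by simp
qed

lemma path_weight_nonneg: "0 \<le> r \<Longrightarrow> 0 \<le> path_weight r d n st"
  unfolding path_weight_def by (simp add: prod_nonneg)

lemma boundary_weight_ge_1: "1 \<le> boundary_weight d n st"
  unfolding boundary_weight_def by (simp add: prod_ge_1 state_weight_ge_1)

lemma sum_extend_path_weight_le:
  fixes r :: real
  assumes r: "0 \<le> r" "r \<le> 6181/10000" and d: "1 \<le> d" and st: "st \<in> PiE {..<n} (allowed_states d)"
  shows "(\<Sum>t\<in>allowed_states d n. path_weight r d (Suc n) (st(n := t)) * boundary_weight d (Suc n) (st(n := t)))
    \<le> 13/5 * (path_weight r d n st * boundary_weight d n st)"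
proof -
  define p where "p = (if d \<le> n then st (n - d) else 0)"
  define w where "w = (if d \<le> n then state_weight p else 1)"
  define PB where "PB = path_weight r d n st * boundary_weight d n st"
  have p: "p \<le> 2"
  proof (cases "d \<le> n")
    case True
    have "st (n - d) \<in> allowed_states d (n - d)" by (rule PiE_mem[OF st]) (use True d in auto)
    then show ?thesis using True unfolding p_def allowed_states_def by simp
  qed (simp add: p_def)
  have w: "0 < w" using state_weight_ge_1[of p] unfolding w_def by simp
  have PB: "0 \<le> PB"
    unfolding PB_def using path_weight_nonneg[OF r(1)] order_trans[OF zero_le_one boundary_weight_ge_1]
    by (rule mult_nonneg_nonneg)
  have "path_weight r d (Suc n) (st(n := t)) * boundary_weight d (Suc n) (st(n := t))
      = PB / w * ((if d \<le> n then r ^ transition_cost p t else 1) * state_weight t)" for t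
    unfolding path_weight_update[OF d] boundary_weight_update[OF d] PB_def w_def p_def
    by (cases "d \<le> n") simp_all
  then have "(\<Sum>t\<in>allowed_states d n. path_weight r d (Suc n) (st(n := t)) * boundary_weight d (Suc n) (st(n := t)))
      = PB / w * (\<Sum>t\<in>allowed_states d n. (if d \<le> n then r ^ transition_cost p t else 1) * state_weight t)"
    by (simp add: sum_distrib_left)
  also have "\<dots> \<le> PB / w * (13/5 * w)"
    using allowed_transition_sum_le[OF r p d, of n] PB w unfolding w_def
    by (intro mult_left_mono) simp_all
  also have "\<dots> = 13/5 * PB" using w by simp
  finally show ?thesis unfolding PB_def .
qed

lemma sum_path_weight_le:
  fixes r :: real
  assumes r: "0 \<le> r" "r \<le> 6181/10000" and d: "1 \<le> d"
  shows "(\<Sum>st\<in>PiE {..<n} (allowed_states d). path_weight r d n st) \<le> (13/5) ^ n"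
proof -
  have "(\<Sum>st\<in>PiE {..<n} (allowed_states d). path_weight r d n st * boundary_weight d n st) \<le> (13/5) ^ n"
  proof (induction n)
    case (Suc n)
    have "(\<Sum>st\<in>PiE {..<Suc n} (allowed_states d). path_weight r d (Suc n) st * boundary_weight d (Suc n) st)
        \<le> (\<Sum>st\<in>PiE {..<n} (allowed_states d). 13/5 * (path_weight r d n st * boundary_weight d n st))"
      unfolding sum_PiE_lessThan_Suc[OF finite_allowed_states]
      by (intro sum_mono sum_extend_path_weight_le r d)
    also have "\<dots> = 13/5 * (\<Sum>st\<in>PiE {..<n} (allowed_states d). path_weight r d n st * boundary_weight d n st)"
      by (rule sum_distrib_left[symmetric])
    also have "\<dots> \<le> 13/5 * (13/5) ^ n" using Suc.IH by simp
    finally show ?case by simp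
  qed (simp add: path_weight_def boundary_weight_def)
  moreover have "(\<Sum>st\<in>PiE {..<n} (allowed_states d). path_weight r d n st)
      \<le> (\<Sum>st\<in>PiE {..<n} (allowed_states d). path_weight r d n st * boundary_weight d n st)"
    using mult_left_mono[OF boundary_weight_ge_1 path_weight_nonneg[OF r(1)]] by (intro sum_mono) simp
  ultimately show ?thesis by linarith
qed

definition pair_state :: "nat \<Rightarrow> nat set \<Rightarrow> nat \<Rightarrow> nat" where
  "pair_state k A x = (if x \<in> A then 1 else if k - x \<in> A then 2 else 0)"

lemma transition_cost_pair_state:
  assumes A: "A \<in> calA_nat k" and x: "d \<le> x" "2 * x < k"
  shows "transition_cost (pair_state k A (x - d)) (pair_state k A x)
    = (if x - d \<in> A \<and> x \<notin> A then 1 else 0) + (if x \<notin> A \<and> k - x \<in> A \<and> k - x + d \<notin> A then 1 else 0)"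
proof -
  have "k - (x - d) = k - x + d" using x by auto
  then show ?thesis
    using calA_nat_complement_notin[OF A, of x] calA_nat_complement_notin[OF A, of "x - d"]
    unfolding transition_cost_def pair_state_def by auto
qed

text \<open>Each unit of cost at \<open>x\<close> exhibits an element of \<open>(A + A) - A\<close>: either \<open>x = (x - d) + d\<close>
  below \<open>k/2\<close>, or \<open>(k - x) + d\<close> above it.\<close>

lemma sum_transition_cost_pair_state_le:
  assumes A: "A \<in> calA_nat k" and d: "1 \<le> d" "d \<in> A"
  shows "(\<Sum>x\<in>{d..<(k + 1) div 2}. transition_cost (pair_state k A (x - d)) (pair_state k A x))
    \<le> sumset_count k A - card A"
proof -
  let ?N = "(k + 1) div 2"
  define X1 where "X1 = {x\<in>{d..<?N}. x - d \<in> A \<and> x \<notin> A}"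
  define X2 where "X2 = {x\<in>{d..<?N}. x \<notin> A \<and> k - x \<in> A \<and> k - x + d \<notin> A}"
  have half: "2 * x < k" if "x < ?N" for x using that by linarith
  have "(\<Sum>x\<in>{d..<?N}. transition_cost (pair_state k A (x - d)) (pair_state k A x))
      = (\<Sum>x\<in>{d..<?N}. (if x \<in> X1 then 1 else 0) + (if x \<in> X2 then 1 else 0))"
    using half by (intro sum.cong refl) (simp add: transition_cost_pair_state[OF A] X1_def X2_def)
  also have "\<dots> = card X1 + card X2"
    unfolding sum.distrib by (simp add: X1_def X2_def sum.If_cases Int_def)
  also have "\<dots> = card (X1 \<union> (\<lambda>x. k - x + d) ` X2)"
  proof -
    have "inj_on (\<lambda>x. k - x + d) X2" unfolding X2_def inj_on_def using half by auto
    moreover have "X1 \<inter> (\<lambda>x. k - x + d) ` X2 = {}" unfolding X1_def X2_def using half by force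
    moreover have "finite X1" "finite X2" unfolding X1_def X2_def by auto
    ultimately show ?thesis by (simp add: card_Un_disjoint card_image)
  qed
  also have "\<dots> \<le> card (sumset_nat A \<inter> {..k} - A)"
  proof (rule card_mono)
    have "y \<in> sumset_nat A" if "y \<in> X1" for y
      using that sumset_natI[OF _ d(2), of "y - d"] unfolding X1_def by auto
    moreover have "k - x + d \<in> sumset_nat A" if "x \<in> X2" for x
      using that sumset_natI[OF _ d(2), of "k - x"] unfolding X2_def by auto
    moreover have "y \<le> k" if "y \<in> X1" for y using that half unfolding X1_def by force
    moreover have "k - x + d \<le> k" if "x \<in> X2" for x using that half unfolding X2_def by force
    ultimately show "X1 \<union> (\<lambda>x. k - x + d) ` X2 \<subseteq> sumset_nat A \<inter> {..k} - A"
      unfolding X1_def X2_def by auto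
  qed simp
  also have "\<dots> = sumset_count k A - card A"
    unfolding sumset_count_def using calA_nat_subset_sumset[OF A]
    by (subst card_Diff_subset) (auto intro: finite_subset)
  finally show ?thesis .
qed

lemma calA_nat_mem_iff_pair_state:
  assumes A: "A \<in> calA_nat k"
  shows "y \<in> A \<longleftrightarrow> y < k \<and> (2 * y < k \<and> pair_state k A y = 1 \<or> k < 2 * y \<and> pair_state k A (k - y) = 2)"
proof -
  have "A \<subseteq> {..<k}" using A unfolding calA_nat_def by auto
  moreover have "k - (k - y) = y" if "y < k" using that by auto
  moreover have "y \<in> A \<Longrightarrow> 2 * y \<noteq> k" using calA_nat_complement_notin[OF A, of y] by auto
  ultimately show ?thesis
    using calA_nat_complement_notin[OF A, of "k - y"] by (auto simp: pair_state_def)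
qed

lemma inj_on_pair_state: "inj_on (\<lambda>A. restrict (pair_state k A) {..<(k + 1) div 2}) (calA_nat k)"
proof (rule inj_onI)
  fix A B assume A: "A \<in> calA_nat k" and B: "B \<in> calA_nat k"
    and eq: "restrict (pair_state k A) {..<(k + 1) div 2} = restrict (pair_state k B) {..<(k + 1) div 2}"
  have "pair_state k A x = pair_state k B x" if "2 * x < k" for x
  proof -
    have "x < (k + 1) div 2" using that by linarith
    then show ?thesis using fun_cong[OF eq, of x] by simp
  qed
  moreover have "2 * (k - y) < k" if "k < 2 * y" "y < k" for y using that by linarith
  ultimately show "A = B"
    unfolding set_eq_iff calA_nat_mem_iff_pair_state[OF A] calA_nat_mem_iff_pair_state[OF B] by metis
qed

lemma sum_calA_nat_least_element_le:
  fixes q :: real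
  assumes q: "0 \<le> q" "q \<le> 6181/10000" and d: "1 \<le> d"
  shows "(\<Sum>A | A \<in> calA_nat k \<and> d \<in> A \<and> (\<forall>x. 0 < x \<and> x < d \<longrightarrow> x \<notin> A). q ^ (sumset_count k A - card A))
    \<le> (13/5) ^ ((k + 1) div 2)"
proof -
  let ?N = "(k + 1) div 2"
  let ?G = "{A. A \<in> calA_nat k \<and> d \<in> A \<and> (\<forall>x. 0 < x \<and> x < d \<longrightarrow> x \<notin> A)}"
  let ?st = "\<lambda>A. restrict (pair_state k A) {..<?N}"
  have "(\<Sum>A\<in>?G. q ^ (sumset_count k A - card A)) \<le> (\<Sum>A\<in>?G. path_weight q d ?N (?st A))"
  proof (rule sum_mono)
    fix A assume A: "A \<in> ?G"
    have "path_weight q d ?N (?st A)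
        = q ^ (\<Sum>x\<in>{d..<?N}. transition_cost (pair_state k A (x - d)) (pair_state k A x))"
      unfolding path_weight_def power_sum by (intro prod.cong) auto
    also have "\<dots> \<ge> q ^ (sumset_count k A - card A)"
      using A q d by (intro power_decreasing sum_transition_cost_pair_state_le) auto
    finally show "q ^ (sumset_count k A - card A) \<le> path_weight q d ?N (?st A)" .
  qed
  also have "\<dots> = (\<Sum>st\<in>?st ` ?G. path_weight q d ?N st)"
    by (rule sum.reindex[symmetric, unfolded comp_def]) (rule inj_on_subset[OF inj_on_pair_state], auto)
  also have "\<dots> \<le> (\<Sum>st\<in>PiE {..<?N} (allowed_states d). path_weight q d ?N st)"
  proof (rule sum_mono2)
    show "finite (PiE {..<?N} (allowed_states d))" by (simp add: finite_PiE finite_allowed_states)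
    show "?st ` ?G \<subseteq> PiE {..<?N} (allowed_states d)"
      by (auto simp: calA_nat_def allowed_states_def pair_state_def)
  qed (simp add: path_weight_nonneg q)
  also have "\<dots> \<le> (13/5) ^ ?N" by (rule sum_path_weight_le[OF q d])
  finally show ?thesis .
qed

lemma least_positive_calA_nat:
  assumes A: "A \<in> calA_nat k" and "A \<noteq> {0}"
  defines "d \<equiv> Min (A - {0})"
  shows "d \<in> A" "0 < d" "d < k" "\<forall>x. 0 < x \<and> x < d \<longrightarrow> x \<notin> A"
proof -
  have A: "A \<subseteq> {..<k}" "0 \<in> A" using A unfolding calA_nat_def by auto
  then have fin: "finite (A - {0})" and ne: "A - {0} \<noteq> {}" using assms(2) by (auto intro: finite_subset)
  show d: "d \<in> A" "0 < d" using Min_in[OF fin ne] unfolding d_def by auto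
  show "d < k" using d A by auto
  show "\<forall>x. 0 < x \<and> x < d \<longrightarrow> x \<notin> A" using Min_le[OF fin] unfolding d_def by force
qed

lemma sum_calA_nat_weight_le:
  fixes q :: real
  assumes q: "0 \<le> q" "q \<le> 6181/10000"
  shows "(\<Sum>A\<in>calA_nat k. q ^ (sumset_count k A - card A)) \<le> 1 + real k * (13/5) ^ ((k + 1) div 2)"
proof -
  let ?B = "(13/5::real) ^ ((k + 1) div 2)"
  let ?f = "\<lambda>A. q ^ (sumset_count k A - card A)"
  let ?C = "calA_nat k - {{0}}"
  have range: "Min (A - {0}) \<in> {1..<k}" if "A \<in> ?C" for A
  proof -
    have "A \<in> calA_nat k" "A \<noteq> {0}" using that by auto
    from least_positive_calA_nat(2,3)[OF this] show ?thesis by simp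
  qed
  have "(\<Sum>A\<in>calA_nat k. ?f A) = (\<Sum>A\<in>calA_nat k \<inter> {{0}}. ?f A) + (\<Sum>A\<in>?C. ?f A)"
    by (rule sum.Int_Diff[OF finite_calA_nat])
  also have "(\<Sum>A\<in>calA_nat k \<inter> {{0}}. ?f A) \<le> 1"
    using q by (cases "{0} \<in> calA_nat k") (simp_all add: power_le_one)
  also have "(\<Sum>A\<in>?C. ?f A) = (\<Sum>d\<in>{1..<k}. \<Sum>A | A \<in> ?C \<and> Min (A - {0}) = d. ?f A)"
    by (rule sum.group[symmetric, OF _ _ image_subsetI[OF range]]) (simp_all add: finite_calA_nat)
  also have "\<dots> \<le> (\<Sum>d\<in>{1..<k}. ?B)"
  proof (rule sum_mono)
    fix d :: nat assume d: "d \<in> {1..<k}"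
    have "d \<in> A \<and> (\<forall>x. 0 < x \<and> x < d \<longrightarrow> x \<notin> A)" if "A \<in> ?C" "Min (A - {0}) = d" for A
    proof -
      have "A \<in> calA_nat k" "A \<noteq> {0}" using that(1) by auto
      from least_positive_calA_nat(1,4)[OF this] show ?thesis unfolding that(2) by blast
    qed
    then have "{A. A \<in> ?C \<and> Min (A - {0}) = d}
        \<subseteq> {A. A \<in> calA_nat k \<and> d \<in> A \<and> (\<forall>x. 0 < x \<and> x < d \<longrightarrow> x \<notin> A)}"
      by auto
    then have "(\<Sum>A | A \<in> ?C \<and> Min (A - {0}) = d. ?f A)
        \<le> (\<Sum>A | A \<in> calA_nat k \<and> d \<in> A \<and> (\<forall>x. 0 < x \<and> x < d \<longrightarrow> x \<notin> A). ?f A)"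
      using q by (intro sum_mono2) (auto intro: finite_subset[OF _ finite_calA_nat])
    also have "\<dots> \<le> ?B" using d by (intro sum_calA_nat_least_element_le q) simp
    finally show "(\<Sum>A | A \<in> ?C \<and> Min (A - {0}) = d. ?f A) \<le> ?B" .
  qed
  also have "\<dots> \<le> real k * ?B" by simp
  finally show ?thesis by simp
qed

definition calA_weight_sum :: "real \<Rightarrow> nat \<Rightarrow> real" where
  "calA_weight_sum q k = (\<Sum>A\<in>calA_nat k. q ^ (sumset_count k A - card A + (k + 1)))"

lemma calA_weight_sum_nonneg: "0 \<le> q \<Longrightarrow> 0 \<le> calA_weight_sum q k"
  unfolding calA_weight_sum_def by (simp add: sum_nonneg)

lemma power_half_times_power_le:
  fixes a q :: real
  assumes "0 \<le> a" "0 \<le> q" "q \<le> 1" "a * q\<^sup>2 \<le> 1"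
  shows "a ^ ((k + 1) div 2) * q ^ (k + 1) \<le> sqrt (a * q\<^sup>2) ^ k"
proof -
  let ?N = "(k + 1) div 2"
  have "a ^ ?N * q ^ (k + 1) \<le> a ^ ?N * q ^ (2 * ?N)"
    using assms by (intro mult_left_mono power_decreasing) auto
  also have "\<dots> = (a * q\<^sup>2) ^ ?N" by (simp only: power_mult power_mult_distrib)
  also have "\<dots> = sqrt (a * q\<^sup>2) ^ (2 * ?N)" using assms by (simp add: power_mult)
  also have "\<dots> \<le> sqrt (a * q\<^sup>2) ^ k" using assms by (intro power_decreasing) auto
  finally show ?thesis .
qed

lemma calA_weight_sum_le:
  fixes q :: real
  assumes q: "0 \<le> q" "q \<le> 6181/10000"
  shows "calA_weight_sum q k \<le> real (Suc k) * sqrt (13/5 * q\<^sup>2) ^ k"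
proof -
  let ?N = "(k + 1) div 2"
  let ?c = "sqrt (13/5 * q\<^sup>2)"
  have "q\<^sup>2 \<le> (6181/10000)\<^sup>2" using q by (intro power_mono) auto
  then have small: "13/5 * q\<^sup>2 \<le> 1" by (simp add: power2_eq_square)
  have "q = sqrt (q\<^sup>2)" using q by simp
  also have "\<dots> \<le> ?c" by (intro real_sqrt_le_mono) simp
  finally have "q \<le> ?c" .
  have "q ^ (k + 1) \<le> q ^ k" using q by (intro power_decreasing) auto
  also have "\<dots> \<le> ?c ^ k" using q \<open>q \<le> ?c\<close> by (intro power_mono) auto
  finally have "q ^ (k + 1) \<le> ?c ^ k" .
  have "calA_weight_sum q k = (\<Sum>A\<in>calA_nat k. q ^ (sumset_count k A - card A)) * q ^ (k + 1)"
    unfolding calA_weight_sum_def sum_distrib_right power_add ..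
  also have "\<dots> \<le> (1 + real k * (13/5) ^ ?N) * q ^ (k + 1)"
    using q by (intro mult_right_mono sum_calA_nat_weight_le) auto
  also have "\<dots> = q ^ (k + 1) + real k * ((13/5) ^ ?N * q ^ (k + 1))"
    by (simp add: algebra_simps)
  also have "\<dots> \<le> ?c ^ k + real k * ?c ^ k"
    using q small \<open>q ^ (k + 1) \<le> ?c ^ k\<close>
    by (intro add_mono mult_left_mono power_half_times_power_le) auto
  also have "\<dots> = real (Suc k) * ?c ^ k" by (simp add: algebra_simps)
  finally show ?thesis .
qed

lemma summable_calA_weight_sum:
  fixes q :: real
  assumes q: "0 \<le> q" "q \<le> 6181/10000"
  shows "summable (calA_weight_sum q)"
proof (rule summable_comparison_test')
  let ?c = "sqrt (13/5 * q\<^sup>2)"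
  have "q\<^sup>2 \<le> (6181/10000)\<^sup>2" using q by (intro power_mono) auto
  then have "norm ?c < 1" by (simp add: power2_eq_square)
  then show "summable (\<lambda>k. real (Suc k) * ?c ^ k)" using geometric_deriv_sums by (blast intro: sums_summable)
  show "norm (calA_weight_sum q k) \<le> real (Suc k) * ?c ^ k" for k
    using calA_weight_sum_le[OF q] calA_weight_sum_nonneg[OF q(1)] by simp
qed

section \<open>Semigroups with small Frobenius number as triples\<close>

definition triple_semigroup :: "nat \<Rightarrow> nat set \<Rightarrow> nat set \<Rightarrow> nat set" where
  "triple_semigroup m A B = {0} \<union> (\<lambda>a. m + a) ` A \<union> (\<lambda>b. 2 * m + b) ` B \<union> {3 * m..}"

definition admissible_triple :: "nat \<Rightarrow> nat set \<Rightarrow> nat set \<Rightarrow> bool" where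
  "admissible_triple m A B \<longleftrightarrow>
     2 \<le> m \<and> A \<subseteq> {..<m} \<and> 0 \<in> A \<and> B \<subseteq> {..<m} \<and> sumset_nat A \<inter> {..<m} \<subseteq> B"

lemma mem_triple_semigroup:
  assumes "A \<subseteq> {..<m}" "B \<subseteq> {..<m}"
  shows "x \<in> triple_semigroup m A B \<longleftrightarrow> x = 0 \<or> (m \<le> x \<and> x < 2 * m \<and> x - m \<in> A)
     \<or> (2 * m \<le> x \<and> x < 3 * m \<and> x - 2 * m \<in> B) \<or> 3 * m \<le> x"
proof -
  have "x \<in> (\<lambda>a. m + a) ` A \<longleftrightarrow> m \<le> x \<and> x < 2 * m \<and> x - m \<in> A"
    using assms by (force intro: image_eqI[where x = "x - m"])
  moreover have "x \<in> (\<lambda>b. 2 * m + b) ` B \<longleftrightarrow> 2 * m \<le> x \<and> x < 3 * m \<and> x - 2 * m \<in> B"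
    using assms by (force intro: image_eqI[where x = "x - 2 * m"])
  ultimately show ?thesis unfolding triple_semigroup_def by auto
qed

lemma gaps_triple_semigroup:
  assumes "admissible_triple m A B"
  shows "UNIV - triple_semigroup m A B
    = {1..<m} \<union> (\<lambda>a. m + a) ` ({..<m} - A) \<union> (\<lambda>b. 2 * m + b) ` ({..<m} - B)"
proof (intro set_eqI iffI)
  have s: "A \<subseteq> {..<m}" "B \<subseteq> {..<m}" using assms unfolding admissible_triple_def by auto
  fix x
  show "x \<in> {1..<m} \<union> (\<lambda>a. m + a) ` ({..<m} - A) \<union> (\<lambda>b. 2 * m + b) ` ({..<m} - B)"
    if "x \<in> UNIV - triple_semigroup m A B"
  proof -
    have "x \<notin> triple_semigroup m A B" using that by simp
    note that = this[unfolded mem_triple_semigroup[OF s]]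
    consider "x < m" | "m \<le> x" "x < 2 * m" | "2 * m \<le> x" by linarith
    then show ?thesis
    proof cases
      case 2
      then have "x \<in> (\<lambda>a. m + a) ` ({..<m} - A)"
        using that by (intro image_eqI[where x = "x - m"]) auto
      then show ?thesis by blast
    next
      case 3
      then have "x \<in> (\<lambda>b. 2 * m + b) ` ({..<m} - B)"
        using that by (intro image_eqI[where x = "x - 2 * m"]) auto
      then show ?thesis by blast
    qed (use that in auto)
  qed
  show "x \<in> UNIV - triple_semigroup m A B"
    if "x \<in> {1..<m} \<union> (\<lambda>a. m + a) ` ({..<m} - A) \<union> (\<lambda>b. 2 * m + b) ` ({..<m} - B)"
    using that mem_triple_semigroup[OF s, of x] by auto
qed

lemma genus_triple_semigroup:
  assumes v: "admissible_triple m A B"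
  shows "genus (triple_semigroup m A B) = (m - 1) + (m - card A) + (m - card B)"
proof -
  let ?GA = "(\<lambda>a. m + a) ` ({..<m} - A)" and ?GB = "(\<lambda>b. 2 * m + b) ` ({..<m} - B)"
  have s: "A \<subseteq> {..<m}" "B \<subseteq> {..<m}" using v unfolding admissible_triple_def by auto
  have "card ?GA = m - card A" "card ?GB = m - card B"
    using s by (subst card_image; auto simp: card_Diff_subset finite_subset)+
  moreover have "?GA \<inter> ?GB = {}" "{1..<m} \<inter> (?GA \<union> ?GB) = {}" by auto
  ultimately have "card ({1..<m} \<union> (?GA \<union> ?GB)) = (m - 1) + ((m - card A) + (m - card B))"
    by (simp add: card_Un_disjoint)
  then show ?thesis unfolding genus_def gaps_triple_semigroup[OF v] by (simp add: Un_assoc)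
qed

lemma numerical_semigroup_triple_semigroup:
  assumes v: "admissible_triple m A B"
  shows "numerical_semigroup (triple_semigroup m A B)"
proof -
  have s: "A \<subseteq> {..<m}" "B \<subseteq> {..<m}" and m: "2 \<le> m" and AB: "sumset_nat A \<inter> {..<m} \<subseteq> B"
    using v unfolding admissible_triple_def by auto
  have closed: "x + y \<in> triple_semigroup m A B"
    if x: "x \<in> triple_semigroup m A B" and y: "y \<in> triple_semigroup m A B" for x y
  proof (cases "x = 0 \<or> y = 0 \<or> 3 * m \<le> x + y")
    case True
    then show ?thesis using x y unfolding mem_triple_semigroup[OF s] by auto
  next
    case False
    then have "m \<le> x" "m \<le> y" "x + y < 3 * m" using x y m unfolding mem_triple_semigroup[OF s] by auto
    then have "x - m \<in> A" "y - m \<in> A" "x + y - 2 * m = (x - m) + (y - m)"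
      using x y unfolding mem_triple_semigroup[OF s] by auto
    then have "x + y - 2 * m \<in> B" using AB \<open>x + y < 3 * m\<close> sumset_natI[of "x - m" A "y - m"] by auto
    then show ?thesis using \<open>x + y < 3 * m\<close> \<open>m \<le> x\<close> \<open>m \<le> y\<close>
      unfolding mem_triple_semigroup[OF s] by auto
  qed
  have "finite (UNIV - triple_semigroup m A B)" unfolding gaps_triple_semigroup[OF v] by auto
  then show ?thesis unfolding numerical_semigroup_def using closed by (auto simp: triple_semigroup_def)
qed

lemma multiplicity_triple_semigroup:
  assumes v: "admissible_triple m A B"
  shows "multiplicity (triple_semigroup m A B) = m"
  unfolding multiplicity_def
proof (rule Least_equality)
  have s: "A \<subseteq> {..<m}" "B \<subseteq> {..<m}" and m: "2 \<le> m" "0 \<in> A"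
    using v unfolding admissible_triple_def by auto
  show "m \<in> triple_semigroup m A B \<and> m \<noteq> 0" using m unfolding mem_triple_semigroup[OF s] by auto
  show "y \<in> triple_semigroup m A B \<and> y \<noteq> 0 \<Longrightarrow> m \<le> y" for y
    unfolding mem_triple_semigroup[OF s] by auto
qed

lemma frobenius_triple_semigroup_less:
  assumes v: "admissible_triple m A B"
  shows "frobenius (triple_semigroup m A B) < 3 * m"
proof -
  have "UNIV - triple_semigroup m A B \<noteq> {}" "finite (UNIV - triple_semigroup m A B)"
    using v unfolding gaps_triple_semigroup[OF v] admissible_triple_def by auto
  moreover have "\<forall>x\<in>UNIV - triple_semigroup m A B. x < 3 * m" unfolding gaps_triple_semigroup[OF v] by auto
  ultimately show ?thesis unfolding frobenius_def using Max_in by blast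
qed

lemma triple_semigroup_inject:
  assumes v: "admissible_triple m A B" and v': "admissible_triple m' A' B'"
    and eq: "triple_semigroup m A B = triple_semigroup m' A' B'"
  shows "m = m' \<and> A = A' \<and> B = B'"
proof -
  have mm: "m = m'" using multiplicity_triple_semigroup[OF v] multiplicity_triple_semigroup[OF v'] eq by simp
  have s: "A \<subseteq> {..<m}" "B \<subseteq> {..<m}" "A' \<subseteq> {..<m}" "B' \<subseteq> {..<m}"
    using v v' mm unfolding admissible_triple_def by auto
  have "a \<in> A \<longleftrightarrow> a \<in> A'" for a
  proof -
    have "m + a \<in> triple_semigroup m A B \<longleftrightarrow> m + a \<in> triple_semigroup m A' B'" using eq mm by simp
    then show ?thesis unfolding mem_triple_semigroup[OF s(1,2)] mem_triple_semigroup[OF s(3,4)]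
      using s by auto
  qed
  moreover have "b \<in> B \<longleftrightarrow> b \<in> B'" for b
  proof -
    have "2 * m + b \<in> triple_semigroup m A B \<longleftrightarrow> 2 * m + b \<in> triple_semigroup m A' B'" using eq mm by simp
    then show ?thesis unfolding mem_triple_semigroup[OF s(1,2)] mem_triple_semigroup[OF s(3,4)]
      using s by auto
  qed
  ultimately show ?thesis using mm by blast
qed

lemma mem_above_frobenius:
  assumes "numerical_semigroup S" and "frobenius S < x"
  shows "x \<in> S"
proof (rule ccontr)
  assume "x \<notin> S"
  then have "x \<le> frobenius S"
    using assms(1) unfolding numerical_semigroup_def frobenius_def by (intro Max_ge) auto
  then show False using assms(2) by simp
qed

lemma multiplicity_mem:
  assumes "numerical_semigroup S"
  shows "multiplicity S \<in> S" and "0 < multiplicity S"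
proof -
  have "\<exists>x. x \<in> S \<and> x \<noteq> 0" using mem_above_frobenius[OF assms, of "Suc (frobenius S)"] by auto
  from LeastI_ex[OF this] show "multiplicity S \<in> S" "0 < multiplicity S"
    unfolding multiplicity_def by auto
qed

lemma not_mem_below_multiplicity: "0 < x \<Longrightarrow> x < multiplicity S \<Longrightarrow> x \<notin> S"
  using not_less_Least[of x "\<lambda>x. x \<in> S \<and> x \<noteq> 0"] unfolding multiplicity_def by auto

lemma multiplicity_ge_2:
  assumes S: "numerical_semigroup S" and g: "1 \<le> genus S"
  shows "2 \<le> multiplicity S"
proof (rule ccontr)
  assume "\<not> 2 \<le> multiplicity S"
  then have "1 \<in> S" using multiplicity_mem[OF S] by (metis One_nat_def less_2_cases not_le not_less_zero)
  have "n \<in> S" for n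
  proof (induction n)
    case 0
    show ?case using S unfolding numerical_semigroup_def by simp
  next
    case (Suc n)
    show ?case using S Suc.IH \<open>1 \<in> S\<close> unfolding numerical_semigroup_def by (metis Suc_eq_plus1)
  qed
  then have "UNIV - S = {}" by blast
  then show False using g unfolding genus_def by (simp only: card.empty)
qed

lemma numerical_semigroup_eq_triple_semigroup:
  assumes S: "numerical_semigroup S" and g: "1 \<le> genus S" and f: "frobenius S < 3 * multiplicity S"
  defines "m \<equiv> multiplicity S"
  defines "A \<equiv> {a. a < m \<and> m + a \<in> S}" and "B \<equiv> {b. b < m \<and> 2 * m + b \<in> S}"
  shows "admissible_triple m A B" and "S = triple_semigroup m A B"
proof -
  have closed: "a \<in> S \<Longrightarrow> b \<in> S \<Longrightarrow> a + b \<in> S" for a b using S unfolding numerical_semigroup_def by auto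
  have s: "A \<subseteq> {..<m}" "B \<subseteq> {..<m}" unfolding A_def B_def by auto
  show v: "admissible_triple m A B"
    unfolding admissible_triple_def
  proof (intro conjI s subsetI)
    show "2 \<le> m" unfolding m_def by (rule multiplicity_ge_2[OF S g])
    show "0 \<in> A" unfolding A_def m_def using multiplicity_mem[OF S] by simp
    fix x assume "x \<in> sumset_nat A \<inter> {..<m}"
    then obtain a b where ab: "a \<in> A" "b \<in> A" "x = a + b" "x < m" unfolding sumset_nat_def by auto
    have "2 * m + x = (m + a) + (m + b)" using ab(3) by simp
    also have "\<dots> \<in> S" using ab(1,2) closed unfolding A_def by simp
    finally show "x \<in> B" using ab(4) unfolding B_def by simp
  qed
  show "S = triple_semigroup m A B"
  proof (intro set_eqI)
    fix x
    consider "x = 0" | "0 < x" "x < m" | "m \<le> x" "x < 2 * m" | "2 * m \<le> x" "x < 3 * m" | "3 * m \<le> x"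
      by linarith
    then show "x \<in> S \<longleftrightarrow> x \<in> triple_semigroup m A B"
    proof cases
      case 1
      then show ?thesis using S unfolding mem_triple_semigroup[OF s] numerical_semigroup_def by simp
    next
      case 2
      then have "x \<notin> S" using not_mem_below_multiplicity unfolding m_def by blast
      with 2 show ?thesis unfolding mem_triple_semigroup[OF s] by simp
    next
      case 5
      then have "x \<in> S" using mem_above_frobenius[OF S] f unfolding m_def by simp
      with 5 show ?thesis unfolding mem_triple_semigroup[OF s] by simp
    qed (unfold mem_triple_semigroup[OF s], auto simp: A_def B_def)
  qed
qed

definition admissible_triples :: "nat \<Rightarrow> (nat \<times> nat set \<times> nat set) set" where
  "admissible_triples g =
     {(m, A, B). admissible_triple m A B \<and> (m - 1) + (m - card A) + (m - card B) = g}"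

text \<open>For \<open>g = 0\<close> the only semigroup is \<open>UNIV\<close>, whose Frobenius number is the junk value
  \<open>Max {}\<close>; hence the restriction to positive genus.\<close>

lemma t_count_eq_card_admissible_triples:
  assumes g: "1 \<le> g"
  shows "t_count g = card (admissible_triples g)"
proof -
  let ?S = "\<lambda>(m, A, B). triple_semigroup m A B"
  have "{S. numerical_semigroup S \<and> genus S = g \<and> frobenius S < 3 * multiplicity S} = ?S ` admissible_triples g"
  proof (intro set_eqI iffI)
    fix S assume "S \<in> {S. numerical_semigroup S \<and> genus S = g \<and> frobenius S < 3 * multiplicity S}"
    then have S: "numerical_semigroup S" "genus S = g" "frobenius S < 3 * multiplicity S" by auto
    obtain m A B where v: "admissible_triple m A B" and eq: "S = triple_semigroup m A B"
      using numerical_semigroup_eq_triple_semigroup[OF S(1) _ S(3)] S(2) g by blast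
    then have "(m, A, B) \<in> admissible_triples g"
      using genus_triple_semigroup[OF v] S(2) unfolding admissible_triples_def by simp
    then show "S \<in> ?S ` admissible_triples g" using eq by force
  next
    fix S assume "S \<in> ?S ` admissible_triples g"
    then obtain m A B where "admissible_triple m A B" "(m - 1) + (m - card A) + (m - card B) = g"
      "S = triple_semigroup m A B" unfolding admissible_triples_def by auto
    then show "S \<in> {S. numerical_semigroup S \<and> genus S = g \<and> frobenius S < 3 * multiplicity S}"
      by (simp add: numerical_semigroup_triple_semigroup genus_triple_semigroup
        frobenius_triple_semigroup_less multiplicity_triple_semigroup)
  qed
  moreover have "inj_on ?S (admissible_triples g)"
    by (rule inj_onI) (auto simp: admissible_triples_def dest: triple_semigroup_inject)
  ultimately show ?thesis unfolding t_count_def by (simp add: card_image)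
qed

section \<open>Counting the triples\<close>

lemma sum_diagonal_binomial_eq_fib: "(\<Sum>u | 2 * u \<le> t. (t - u) choose u) = fib (t + 1)"
proof -
  have "(\<Sum>u | 2 * u \<le> t. (t - u) choose u) = (\<Sum>u = 0..t. (t - u) choose u)"
    by (rule sum.mono_neutral_left) auto
  also have "\<dots> = fib (t + 1)" using ne_diagonal_fib[of t] by simp
  finally show ?thesis .
qed

lemma sum_binomial_reindex_diagonal:
  "(\<Sum>(n, i)\<in>{(n, i). n \<le> E \<and> i \<le> n \<and> 2 * n \<le> E + i}. (n choose i) * f (E + i - 2 * n))
    = (\<Sum>(t, u)\<in>{(t, u). t \<le> E \<and> 2 * u \<le> t}. ((t - u) choose u) * f (E - t))"
proof (rule sum.reindex_bij_witness[of _ "\<lambda>(t, u). (t - u, t - 2 * u)" "\<lambda>(n, i). (2 * n - i, n - i)"])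
  fix a assume a: "a \<in> {(n, i). n \<le> E \<and> i \<le> n \<and> 2 * n \<le> E + i}"
  obtain n i where ni: "a = (n, i)" by (cases a)
  show "(\<lambda>(t, u). (t - u, t - 2 * u)) ((\<lambda>(n, i). (2 * n - i, n - i)) a) = a"
    and "(\<lambda>(n, i). (2 * n - i, n - i)) a \<in> {(t, u). t \<le> E \<and> 2 * u \<le> t}" using a ni by auto
  have "n choose i = n choose (n - i)" using a ni by (intro binomial_symmetric) auto
  then show "(case (\<lambda>(n, i). (2 * n - i, n - i)) a of (t, u) \<Rightarrow> ((t - u) choose u) * f (E - t))
     = (case a of (n, i) \<Rightarrow> (n choose i) * f (E + i - 2 * n))"
    using a ni by (auto simp: algebra_simps)
next
  fix b assume b: "b \<in> {(t, u). t \<le> E \<and> 2 * u \<le> t}"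
  obtain t u where tu: "b = (t, u)" by (cases b)
  show "(\<lambda>(n, i). (2 * n - i, n - i)) ((\<lambda>(t, u). (t - u, t - 2 * u)) b) = b"
    and "(\<lambda>(t, u). (t - u, t - 2 * u)) b \<in> {(n, i). n \<le> E \<and> i \<le> n \<and> 2 * n \<le> E + i}"
    using b tu by auto
qed

lemma fib_binomial_convolution:
  fixes E c :: nat
  shows "(\<Sum>n\<le>E. \<Sum>i\<le>n. if 2 * n \<le> E + i then (n choose i) * (c choose (E + i - 2 * n)) else 0)
       = (\<Sum>j\<le>c. (c choose j) * fib (E + 1 - j))"
proof -
  have "(\<Sum>n\<le>E. \<Sum>i\<le>n. if 2 * n \<le> E + i then (n choose i) * (c choose (E + i - 2 * n)) else 0)
      = (\<Sum>(n, i)\<in>Sigma {..E} atMost. if 2 * n \<le> E + i then (n choose i) * (c choose (E + i - 2 * n)) else 0)"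
    by (rule sum.Sigma) auto
  also have "\<dots> = (\<Sum>(n, i)\<in>{(n, i). n \<le> E \<and> i \<le> n \<and> 2 * n \<le> E + i}. (n choose i) * (c choose (E + i - 2 * n)))"
    by (rule sum.mono_neutral_cong_right) (auto split: if_splits)
  also have "\<dots> = (\<Sum>(t, u)\<in>{(t, u). t \<le> E \<and> 2 * u \<le> t}. ((t - u) choose u) * (c choose (E - t)))"
    by (rule sum_binomial_reindex_diagonal)
  also have "\<dots> = (\<Sum>t\<le>E. \<Sum>u | 2 * u \<le> t. ((t - u) choose u) * (c choose (E - t)))"
  proof -
    have "{(t, u). t \<le> E \<and> 2 * u \<le> t} = Sigma {..E} (\<lambda>t. {u. 2 * u \<le> t})" by auto
    moreover have "finite {u::nat. 2 * u \<le> t}" for t by (rule finite_subset[of _ "{..t}"]) auto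
    ultimately show ?thesis by (simp add: sum.Sigma)
  qed
  also have "\<dots> = (\<Sum>t\<le>E. fib (t + 1) * (c choose (E - t)))"
    by (simp add: sum_distrib_right[symmetric] sum_diagonal_binomial_eq_fib)
  also have "\<dots> = (\<Sum>j\<le>E. (c choose j) * fib (E + 1 - j))"
    by (rule sum.reindex_bij_witness[of _ "\<lambda>j. E - j" "\<lambda>t. E - t"]) (auto simp: Suc_diff_le)
  also have "\<dots> = (\<Sum>j\<le>E + c. (c choose j) * fib (E + 1 - j))"
    by (rule sum.mono_neutral_left) auto
  also have "\<dots> = (\<Sum>j\<le>c. (c choose j) * fib (E + 1 - j))"
    by (rule sum.mono_neutral_right) auto
  finally show ?thesis .
qed

definition residue_sets :: "nat \<Rightarrow> nat set set" where
  "residue_sets m = {A. A \<subseteq> {..<m} \<and> 0 \<in> A}"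

definition completions :: "nat \<Rightarrow> nat set \<Rightarrow> nat \<Rightarrow> nat set set" where
  "completions m A g =
     {B. B \<subseteq> {..<m} \<and> sumset_nat A \<inter> {..<m} \<subseteq> B \<and> (m - 1) + (m - card A) + (m - card B) = g}"

text \<open>The value \<open>0\<close> for \<open>B = {..<m}\<close> cannot clash with a genuine gap, since \<open>0 \<in> A + A \<subseteq> B\<close>.\<close>

definition largest_gap :: "nat \<Rightarrow> nat set \<Rightarrow> nat" where
  "largest_gap m B = (if B = {..<m} then 0 else Max ({..<m} - B))"

definition gap_completion_count :: "nat \<Rightarrow> nat \<Rightarrow> nat set \<Rightarrow> nat \<Rightarrow> nat" where
  "gap_completion_count g m A k = (if k \<notin> sumset_nat A \<and> 2 * m \<le> g + card A
     then (k - card (sumset_nat A \<inter> {..<k})) choose (g + card A - 2 * m) else 0)"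

lemma finite_residue_sets: "finite (residue_sets m)"
  by (rule finite_subset[of _ "Pow {..<m}"]) (auto simp: residue_sets_def)

lemma finite_completions: "finite (completions m A g)"
  by (rule finite_subset[of _ "Pow {..<m}"]) (auto simp: completions_def)

lemma card_admissible_triples:
  "card (admissible_triples g) = (\<Sum>m\<in>{2..g + 1}. \<Sum>A\<in>residue_sets m. card (completions m A g))"
proof -
  have "admissible_triples g = Sigma {2..g + 1} (\<lambda>m. Sigma (residue_sets m) (\<lambda>A. completions m A g))"
    unfolding admissible_triples_def admissible_triple_def residue_sets_def completions_def by auto
  then show ?thesis
    by (simp add: card_SigmaI finite_residue_sets finite_completions finite_SigmaI)
qed

lemma card_eq_sum_card_fibres:
  assumes "finite S" "finite T" "f ` S \<subseteq> T"
  shows "card S = (\<Sum>y\<in>T. card {x\<in>S. f x = y})"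
proof -
  have "card S = (\<Sum>x\<in>S. 1)" by simp
  also have "\<dots> = (\<Sum>y\<in>T. \<Sum>x\<in>{x\<in>S. f x = y}. 1)" by (rule sum.group[symmetric, OF assms])
  finally show ?thesis by simp
qed

lemma card_gap_Un_above:
  assumes "Y \<subseteq> {..<k}"
  shows "card (({..<k} - Y) \<union> {k<..<m}) = (k - card Y) + (m - 1 - k)"
  using assms by (subst card_Un_disjoint) (auto simp: card_Diff_subset finite_subset)

lemma largest_gap_gap_Un_above:
  assumes "Y \<subseteq> {..<k}" "k < m"
  shows "largest_gap m (({..<k} - Y) \<union> {k<..<m}) = k"
proof -
  have "{..<m} - (({..<k} - Y) \<union> {k<..<m}) = insert k Y" using assms by auto
  then show ?thesis
    unfolding largest_gap_def using assms by (auto intro!: Max_eqI intro: finite_subset[of _ "{..<k}"])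
qed

lemma largest_gap_decomposition:
  assumes B: "B \<subseteq> {..<m}" and gap: "largest_gap m B = k" and k: "1 \<le> k"
  shows "k \<in> {..<m} - B" and "B = ({..<k} - ({..<k} - B)) \<union> {k<..<m}"
proof -
  have "B \<noteq> {..<m}" using gap k unfolding largest_gap_def by auto
  then have max: "Max ({..<m} - B) = k" and ne: "{..<m} - B \<noteq> {}"
    using gap B unfolding largest_gap_def by auto
  show kB: "k \<in> {..<m} - B" using Max_in[OF _ ne] max by auto
  have above: "x \<in> B" if "k < x" "x < m" for x
    using Max_ge[of "{..<m} - B" x] that max by (cases "x \<in> B") auto
  show "B = ({..<k} - ({..<k} - B)) \<union> {k<..<m}"
  proof (intro set_eqI)
    fix x show "x \<in> B \<longleftrightarrow> x \<in> ({..<k} - ({..<k} - B)) \<union> {k<..<m}"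
      using above kB B by (cases "x < k"; cases "x = k") auto
  qed
qed

lemma completions_largest_gap:
  assumes A: "A \<in> residue_sets m" and k: "1 \<le> k" "k < m"
  shows "{B\<in>completions m A g. largest_gap m B = k}
    = (if k \<notin> sumset_nat A \<and> 2 * m \<le> g + card A then
        (\<lambda>Y. ({..<k} - Y) \<union> {k<..<m}) ` {Y. Y \<subseteq> {..<k} - sumset_nat A \<and> card Y = g + card A - 2 * m}
       else {})"
    (is "?L = ?R")
proof (intro set_eqI iffI)
  have cA: "card A \<le> m" using A card_mono[of "{..<m}" A] unfolding residue_sets_def by auto
  fix B
  show "B \<in> ?R" if "B \<in> ?L"
  proof -
    from that have B: "B \<subseteq> {..<m}" "sumset_nat A \<inter> {..<m} \<subseteq> B"
      "(m - 1) + (m - card A) + (m - card B) = g" and gap: "largest_gap m B = k"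
      unfolding completions_def by auto
    define Y where "Y = {..<k} - B"
    note kB = largest_gap_decomposition(1)[OF B(1) gap k(1)]
    have B_eq: "B = ({..<k} - Y) \<union> {k<..<m}" unfolding Y_def by (rule largest_gap_decomposition(2)[OF B(1) gap k(1)])
    have Y: "Y \<subseteq> {..<k} - sumset_nat A" unfolding Y_def using B(2) k by auto
    then have "card Y \<le> k" using card_mono[of "{..<k}" Y] by auto
    moreover have "card B = (k - card Y) + (m - 1 - k)" using card_gap_Un_above[of Y k m] Y B_eq by auto
    ultimately have "g = 2 * m - card A + card Y" using B(3) k cA by simp
    then show "B \<in> ?R" using kB B(2) Y B_eq cA by auto
  qed
  show "B \<in> ?L" if "B \<in> ?R"
  proof -
    from that have c: "k \<notin> sumset_nat A" "2 * m \<le> g + card A" by (auto split: if_splits)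
    with that obtain Y where Y: "Y \<subseteq> {..<k} - sumset_nat A" "card Y = g + card A - 2 * m"
      "B = ({..<k} - Y) \<union> {k<..<m}" by auto
    have "x \<in> B" if "x \<in> sumset_nat A \<inter> {..<m}" for x
      using that Y c(1) by (cases "x < k"; cases "x = k") auto
    then have sums: "sumset_nat A \<inter> {..<m} \<subseteq> B" by blast
    have "card Y \<le> k" using card_mono[of "{..<k}" Y] Y(1) by auto
    moreover have "card B = (k - card Y) + (m - 1 - k)" using card_gap_Un_above[of Y k m] Y by auto
    ultimately have genus: "(m - 1) + (m - card A) + (m - card B) = g" using Y(2) c(2) k cA by simp
    have "largest_gap m B = k" using Y k by (auto intro: largest_gap_gap_Un_above)
    then show "B \<in> ?L" using sums genus Y k unfolding completions_def by auto
  qed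
qed

lemma card_completions_largest_gap:
  assumes A: "A \<in> residue_sets m" and k: "1 \<le> k" "k < m"
  shows "card {B\<in>completions m A g. largest_gap m B = k} = gap_completion_count g m A k"
proof (cases "k \<notin> sumset_nat A \<and> 2 * m \<le> g + card A")
  case True
  let ?Ys = "{Y. Y \<subseteq> {..<k} - sumset_nat A \<and> card Y = g + card A - 2 * m}"
  have "inj_on (\<lambda>Y. ({..<k} - Y) \<union> {k<..<m}) ?Ys"
  proof (rule inj_onI)
    fix Y Z assume "Y \<in> ?Ys" "Z \<in> ?Ys" and eq: "({..<k} - Y) \<union> {k<..<m} = ({..<k} - Z) \<union> {k<..<m}"
    then have "Y = {..<k} - (({..<k} - Y) \<union> {k<..<m})" "Z = {..<k} - (({..<k} - Z) \<union> {k<..<m})" by auto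
    then show "Y = Z" using eq by simp
  qed
  moreover have "card ({..<k} - sumset_nat A) = k - card (sumset_nat A \<inter> {..<k})"
    by (subst card_Diff_subset_Int) (auto simp: Int_commute)
  ultimately show ?thesis
    using True by (simp add: completions_largest_gap[OF A k] card_image n_subsets gap_completion_count_def)
next
  case False
  then show ?thesis
    by (simp only: completions_largest_gap[OF A k] gap_completion_count_def if_False card.empty)
qed

lemma card_completions_largest_gap_0:
  assumes m: "2 \<le> m" and A: "A \<in> residue_sets m"
  shows "card {B\<in>completions m A g. largest_gap m B = 0} = (if (m - 1) + (m - card A) = g then 1 else 0)"
proof -
  have zero: "0 \<in> sumset_nat A \<inter> {..<m}" using sumset_natI[of 0 A 0] A m unfolding residue_sets_def by auto
  have full: "B = {..<m}" if B: "B \<in> completions m A g" and gap: "largest_gap m B = 0" for B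
  proof (rule ccontr)
    assume ne: "B \<noteq> {..<m}"
    then have "{..<m} - B \<noteq> {}" using B unfolding completions_def by auto
    then have "Max ({..<m} - B) \<in> {..<m} - B" by (intro Max_in) auto
    moreover have "0 \<in> B" using B zero unfolding completions_def by auto
    ultimately show False using gap ne unfolding largest_gap_def by auto
  qed
  have "{B\<in>completions m A g. largest_gap m B = 0} = (if (m - 1) + (m - card A) = g then {{..<m}} else {})"
  proof (intro set_eqI iffI)
    fix B assume B: "B \<in> {B\<in>completions m A g. largest_gap m B = 0}"
    then have "B = {..<m}" using full by blast
    with B show "B \<in> (if (m - 1) + (m - card A) = g then {{..<m}} else {})"
      unfolding completions_def by auto
  next
    fix B assume "B \<in> (if (m - 1) + (m - card A) = g then {{..<m}} else {})"
    then show "B \<in> {B\<in>completions m A g. largest_gap m B = 0}"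
      unfolding completions_def largest_gap_def by (auto split: if_splits)
  qed
  then show ?thesis by simp
qed

lemma card_completions:
  assumes m: "2 \<le> m" and A: "A \<in> residue_sets m"
  shows "card (completions m A g) = (if (m - 1) + (m - card A) = g then 1 else 0)
    + (\<Sum>k\<in>{1..<m}. gap_completion_count g m A k)"
proof -
  have "largest_gap m B \<in> {..<m}" if "B \<in> completions m A g" for B
  proof (cases "B = {..<m}")
    case False
    then have "{..<m} - B \<noteq> {}" using that unfolding completions_def by auto
    then have "Max ({..<m} - B) \<in> {..<m} - B" by (intro Max_in) auto
    then show ?thesis using False unfolding largest_gap_def by auto
  qed (use m in \<open>simp add: largest_gap_def\<close>)
  then have "card (completions m A g) = (\<Sum>k<m. card {B\<in>completions m A g. largest_gap m B = k})"
    by (intro card_eq_sum_card_fibres finite_completions) auto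
  also have "{..<m} = insert 0 {1..<m}" using m by auto
  finally show ?thesis
    using card_completions_largest_gap_0[OF m A] card_completions_largest_gap[OF A] by simp
qed

lemma residue_sets_full_completion:
  assumes m: "2 \<le> m" "m \<le> g + 1"
  shows "{A\<in>residue_sets m. (m - 1) + (m - card A) = g}
    = (\<lambda>Y. {..<m} - Y) ` {Y. Y \<subseteq> {1..<m} \<and> card Y = g + 1 - m}"
    (is "_ = _ ` ?Ys")
proof (intro set_eqI iffI)
  fix A assume "A \<in> {A\<in>residue_sets m. (m - 1) + (m - card A) = g}"
  then have A: "A \<subseteq> {..<m}" "0 \<in> A" "(m - 1) + (m - card A) = g" unfolding residue_sets_def by auto
  define Y where "Y = {1..<m} - A"
  have A_eq: "A = {..<m} - Y" unfolding Y_def using A by (auto simp: Suc_le_eq intro: Nat.gr0I)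
  have c1: "1 \<le> card A" using A by (auto simp: Suc_le_eq card_gt_0_iff intro: finite_subset)
  have c2: "card A \<le> m" using card_mono[OF _ A(1)] by simp
  have "card Y = card ({1..<m} - (A - {0}))" unfolding Y_def by (rule arg_cong[where f = card]) auto
  also have "\<dots> = card {1..<m} - card (A - {0})" using A by (intro card_Diff_subset) (auto intro: finite_subset)
  also have "card (A - {0}) = card A - 1" using A by (simp add: finite_subset)
  finally have "card Y = g + 1 - m" using A(3) c1 c2 by simp
  moreover have "Y \<subseteq> {1..<m}" unfolding Y_def by auto
  ultimately show "A \<in> (\<lambda>Y. {..<m} - Y) ` ?Ys" using A_eq by auto
next
  fix A assume "A \<in> (\<lambda>Y. {..<m} - Y) ` ?Ys"
  then obtain Y where Y: "Y \<subseteq> {1..<m}" "card Y = g + 1 - m" "A = {..<m} - Y" by auto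
  have cA: "card A = m - card Y" unfolding Y(3) using Y(1) by (subst card_Diff_subset) (auto intro: finite_subset)
  have "card Y \<le> m - 1" using card_mono[OF _ Y(1)] by simp
  then have "(m - 1) + (m - card A) = g" using cA Y(2) m by simp
  moreover have "A \<in> residue_sets m" unfolding residue_sets_def using Y m by auto
  ultimately show "A \<in> {A\<in>residue_sets m. (m - 1) + (m - card A) = g}" by simp
qed

lemma sum_residue_sets_full_completion:
  assumes m: "2 \<le> m" "m \<le> g + 1"
  shows "(\<Sum>A\<in>residue_sets m. if (m - 1) + (m - card A) = g then 1 else 0::nat) = (m - 1) choose (g + 1 - m)"
proof -
  let ?Ys = "{Y. Y \<subseteq> {1..<m} \<and> card Y = g + 1 - m}"
  have "inj_on (\<lambda>Y. {..<m} - Y) ?Ys"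
  proof (rule inj_onI)
    fix Y Z assume "Y \<in> ?Ys" "Z \<in> ?Ys" "{..<m} - Y = {..<m} - Z"
    then have "Y = {..<m} - ({..<m} - Y)" "Z = {..<m} - ({..<m} - Z)" by auto
    then show "Y = Z" using \<open>{..<m} - Y = {..<m} - Z\<close> by simp
  qed
  then have "card {A\<in>residue_sets m. (m - 1) + (m - card A) = g} = (m - 1) choose (g + 1 - m)"
    unfolding residue_sets_full_completion[OF m] by (simp add: card_image n_subsets)
  then show ?thesis by (simp add: sum.If_cases finite_residue_sets Int_def conj_commute)
qed

lemma sum_full_completions_eq_fib:
  assumes g: "1 \<le> g"
  shows "(\<Sum>m\<in>{2..g + 1}. \<Sum>A\<in>residue_sets m. if (m - 1) + (m - card A) = g then 1 else 0::nat) = fib (g + 1)"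
proof -
  have "(\<Sum>m\<in>{2..g + 1}. \<Sum>A\<in>residue_sets m. if (m - 1) + (m - card A) = g then 1 else 0::nat)
      = (\<Sum>m\<in>{2..g + 1}. (m - 1) choose (g + 1 - m))"
    by (intro sum.cong refl sum_residue_sets_full_completion) auto
  also have "\<dots> = (\<Sum>k = 0..<g. (g - k) choose k)"
    by (rule sum.reindex_bij_witness[of _ "\<lambda>k. g + 1 - k" "\<lambda>m. g + 1 - m"]) auto
  also have "\<dots> = (\<Sum>k = 0..g. (g - k) choose k)"
    using g by (simp add: atLeastLessThanSuc_atLeastAtMost[symmetric])
  also have "\<dots> = fib (g + 1)" using ne_diagonal_fib[of g] by simp
  finally show ?thesis .
qed

lemma sumset_nat_Un_above:
  assumes "A \<subseteq> {..<k}" "X \<subseteq> {k<..}"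
  shows "sumset_nat (A \<union> X) \<inter> {..k} = sumset_nat A \<inter> {..k}"
proof (intro set_eqI iffI)
  fix x assume "x \<in> sumset_nat (A \<union> X) \<inter> {..k}"
  then obtain a b where ab: "a \<in> A \<union> X" "b \<in> A \<union> X" "x = a + b" "x \<le> k" unfolding sumset_nat_def by auto
  then have "a \<in> A" "b \<in> A" using assms by auto
  then show "x \<in> sumset_nat A \<inter> {..k}" using ab unfolding sumset_nat_def by auto
next
  fix x assume "x \<in> sumset_nat A \<inter> {..k}"
  then show "x \<in> sumset_nat (A \<union> X) \<inter> {..k}" using sumset_nat_mono[of A "A \<union> X"] by auto
qed

lemma sum_Pow_card:
  fixes G :: "nat \<Rightarrow> nat"
  assumes "finite S"
  shows "(\<Sum>X\<in>Pow S. G (card X)) = (\<Sum>i\<in>{..card S}. (card S choose i) * G i)"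
proof -
  have "(\<Sum>X\<in>Pow S. G (card X)) = (\<Sum>i\<in>{..card S}. \<Sum>X\<in>{X\<in>Pow S. card X = i}. G (card X))"
    by (rule sum.group[symmetric]) (use assms in \<open>auto intro: card_mono\<close>)
  also have "\<dots> = (\<Sum>i\<in>{..card S}. (card S choose i) * G i)"
  proof (intro sum.cong refl)
    fix i
    have e: "{X\<in>Pow S. card X = i} = {X. X \<subseteq> S \<and> card X = i}" by auto
    have "(\<Sum>X\<in>{X\<in>Pow S. card X = i}. G (card X)) = (\<Sum>X\<in>{X\<in>Pow S. card X = i}. G i)" by simp
    also have "\<dots> = card {X\<in>Pow S. card X = i} * G i" by simp
    also have "\<dots> = (card S choose i) * G i" unfolding e n_subsets[OF assms] ..
    finally show "(\<Sum>X\<in>{X\<in>Pow S. card X = i}. G (card X)) = (card S choose i) * G i" .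
  qed
  finally show ?thesis .
qed

lemma calA_nat_Un_above:
  assumes A: "A \<in> calA_nat k" and X: "X \<subseteq> {k<..<m}"
  shows "card (A \<union> X) = card A + card X"
    and "card (sumset_nat (A \<union> X) \<inter> {..<k}) = sumset_count k A"
    and "k \<notin> sumset_nat (A \<union> X)"
proof -
  have A: "A \<subseteq> {..<k}" "k \<notin> sumset_nat A" using A unfolding calA_nat_def by auto
  have sums: "sumset_nat (A \<union> X) \<inter> {..k} = sumset_nat A \<inter> {..k}"
    using X by (intro sumset_nat_Un_above[OF A(1)]) auto
  then show "k \<notin> sumset_nat (A \<union> X)" using A(2) by auto
  have "A \<inter> X = {}" using A(1) X by fastforce
  then show "card (A \<union> X) = card A + card X"
    using A X by (intro card_Un_disjoint) (auto intro: finite_subset)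
  have "x \<in> sumset_nat (A \<union> X) \<inter> {..<k} \<longleftrightarrow> x \<in> sumset_nat A \<inter> {..k}" for x
  proof (cases "x = k")
    case False
    then show ?thesis using sums by (auto simp: set_eq_iff less_le)
  qed (use A(2) in simp)
  then have "sumset_nat (A \<union> X) \<inter> {..<k} = sumset_nat A \<inter> {..k}" by blast
  then show "card (sumset_nat (A \<union> X) \<inter> {..<k}) = sumset_count k A" unfolding sumset_count_def by simp
qed

lemma bij_betw_split_at_gap:
  assumes k: "1 \<le> k" "k < m"
  shows "bij_betw (\<lambda>(A, X). A \<union> X) (calA_nat k \<times> Pow {k<..<m}) {A \<in> residue_sets m. k \<notin> sumset_nat A}"
proof (rule bij_betw_byWitness[where f' = "\<lambda>A. (A \<inter> {..<k}, A \<inter> {k<..<m})"])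
  show "\<forall>p\<in>calA_nat k \<times> Pow {k<..<m}. (\<lambda>A. (A \<inter> {..<k}, A \<inter> {k<..<m})) ((\<lambda>(A, X). A \<union> X) p) = p"
    unfolding calA_nat_def by auto
  show "\<forall>A\<in>{A \<in> residue_sets m. k \<notin> sumset_nat A}. (\<lambda>(A, X). A \<union> X) ((\<lambda>A. (A \<inter> {..<k}, A \<inter> {k<..<m})) A) = A"
  proof clarsimp
    fix A assume "A \<in> residue_sets m" "k \<notin> sumset_nat A"
    then have "A \<subseteq> {..<m}" "k \<notin> A" using sumset_natI[of 0 A k] unfolding residue_sets_def by auto
    then have split: "x < k \<or> k < x \<and> x < m" if "x \<in> A" for x
      using that by (metis lessThan_iff nat_neq_iff subsetD)
    then show "A \<inter> {..<k} \<union> A \<inter> {k<..<m} = A" by (force dest: split)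
  qed
  show "(\<lambda>(A, X). A \<union> X) ` (calA_nat k \<times> Pow {k<..<m}) \<subseteq> {A \<in> residue_sets m. k \<notin> sumset_nat A}"
    using calA_nat_Un_above(3) k unfolding calA_nat_def residue_sets_def by force
  show "(\<lambda>A. (A \<inter> {..<k}, A \<inter> {k<..<m})) ` {A \<in> residue_sets m. k \<notin> sumset_nat A}
      \<subseteq> calA_nat k \<times> Pow {k<..<m}"
  proof (rule image_subsetI)
    fix A assume "A \<in> {A \<in> residue_sets m. k \<notin> sumset_nat A}"
    then have A: "A \<subseteq> {..<m}" "0 \<in> A" "k \<notin> sumset_nat A" unfolding residue_sets_def by auto
    have "sumset_nat (A \<inter> {..<k}) \<subseteq> sumset_nat A" by (rule sumset_nat_mono) auto
    then show "(A \<inter> {..<k}, A \<inter> {k<..<m}) \<in> calA_nat k \<times> Pow {k<..<m}"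
      using A k unfolding calA_nat_def by auto
  qed
qed

lemma sum_residue_sets_split:
  assumes k: "1 \<le> k" "k < m"
  shows "(\<Sum>A\<in>residue_sets m. gap_completion_count g m A k)
       = (\<Sum>A'\<in>calA_nat k. \<Sum>X\<in>Pow {k<..<m}.
            if 2 * m \<le> g + card A' + card X then (k - sumset_count k A') choose (g + card A' + card X - 2 * m) else 0)"
proof -
  let ?F = "\<lambda>A. if 2 * m \<le> g + card A then (k - card (sumset_nat A \<inter> {..<k})) choose (g + card A - 2 * m) else 0"
  have "(\<Sum>A\<in>residue_sets m. gap_completion_count g m A k) = (\<Sum>A | A \<in> residue_sets m \<and> k \<notin> sumset_nat A. ?F A)"
    unfolding gap_completion_count_def by (rule sum.mono_neutral_cong_right) (auto simp: finite_residue_sets)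
  also have "\<dots> = (\<Sum>p\<in>calA_nat k \<times> Pow {k<..<m}. ?F ((\<lambda>(A, X). A \<union> X) p))"
    by (rule sum.reindex_bij_betw[OF bij_betw_split_at_gap[OF k], symmetric])
  also have "\<dots> = (\<Sum>(A', X)\<in>calA_nat k \<times> Pow {k<..<m}.
      if 2 * m \<le> g + card A' + card X then (k - sumset_count k A') choose (g + card A' + card X - 2 * m) else 0)"
    by (intro sum.cong refl) (clarsimp simp: calA_nat_Un_above add.assoc)
  also have "\<dots> = (\<Sum>A'\<in>calA_nat k. \<Sum>X\<in>Pow {k<..<m}.
      if 2 * m \<le> g + card A' + card X then (k - sumset_count k A') choose (g + card A' + card X - 2 * m) else 0)"
    by (rule sum.cartesian_product[symmetric])
  finally show ?thesis .
qed

lemma fib_binomial_convolution_atMost: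
  assumes "E \<le> N"
  shows "(\<Sum>n\<le>N. \<Sum>i\<le>n. if 2 * n \<le> E + i then (n choose i) * (c choose (E + i - 2 * n)) else 0)
       = (\<Sum>j\<le>c. (c choose j) * fib (E + 1 - j))"
proof -
  have "(\<Sum>n\<le>N. \<Sum>i\<le>n. if 2 * n \<le> E + i then (n choose i) * (c choose (E + i - 2 * n)) else 0)
      = (\<Sum>n\<le>E. \<Sum>i\<le>n. if 2 * n \<le> E + i then (n choose i) * (c choose (E + i - 2 * n)) else 0)"
    using assms by (intro sum.mono_neutral_right ballI sum.neutral) auto
  then show ?thesis by (simp only: fib_binomial_convolution)
qed

lemma sum_binomial_products_eq_fib:
  fixes k a c g :: nat
  assumes k: "1 \<le> k" and a: "a \<le> k"
  shows "(\<Sum>m\<in>{k + 1..g + 1}. \<Sum>i\<le>m - 1 - k. ((m - 1 - k) choose i) *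
            (if 2 * m \<le> g + a + i then c choose (g + a + i - 2 * m) else 0))
       = (\<Sum>j\<le>c. (c choose j) * fib (g + a - (2 * k + 1 + j)))"
proof (cases "2 * k + 2 \<le> g + a")
  case False
  have "(\<Sum>m\<in>{k + 1..g + 1}. \<Sum>i\<le>m - 1 - k. ((m - 1 - k) choose i) *
            (if 2 * m \<le> g + a + i then c choose (g + a + i - 2 * m) else 0)) = 0"
    using False by (intro sum.neutral ballI) auto
  moreover have "(\<Sum>j\<le>c. (c choose j) * fib (g + a - (2 * k + 1 + j))) = 0"
    using False by (intro sum.neutral ballI) simp
  ultimately show ?thesis by simp
next
  case True
  define E where "E = g + a - (2 * k + 2)"
  have "(\<Sum>m\<in>{k + 1..g + 1}. \<Sum>i\<le>m - 1 - k. ((m - 1 - k) choose i) *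
            (if 2 * m \<le> g + a + i then c choose (g + a + i - 2 * m) else 0))
      = (\<Sum>n\<le>g - k. \<Sum>i\<le>n. if 2 * n \<le> E + i then (n choose i) * (c choose (E + i - 2 * n)) else 0)"
  proof (rule sum.reindex_bij_witness[of _ "\<lambda>n. n + k + 1" "\<lambda>m. m - 1 - k"])
    fix m assume "m \<in> {k + 1..g + 1}"
    define n where "n = m - 1 - k"
    then have m: "m = n + k + 1" using \<open>m \<in> {k + 1..g + 1}\<close> by simp
    have "2 * n \<le> E + i \<longleftrightarrow> 2 * m \<le> g + a + i" "E + i - 2 * n = g + a + i - 2 * m" for i
      unfolding E_def m using True by auto
    then show "(\<Sum>i\<le>m - 1 - k. if 2 * (m - 1 - k) \<le> E + i
          then ((m - 1 - k) choose i) * (c choose (E + i - 2 * (m - 1 - k))) else 0)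
        = (\<Sum>i\<le>m - 1 - k. ((m - 1 - k) choose i) *
            (if 2 * m \<le> g + a + i then c choose (g + a + i - 2 * m) else 0))"
      unfolding m by (intro sum.cong refl) simp_all
  qed (use True a in auto)
  also have "\<dots> = (\<Sum>j\<le>c. (c choose j) * fib (E + 1 - j))"
    using a unfolding E_def by (intro fib_binomial_convolution_atMost) simp
  also have "\<dots> = (\<Sum>j\<le>c. (c choose j) * fib (g + a - (2 * k + 1 + j)))"
    unfolding E_def using True by (intro sum.cong refl) (simp add: algebra_simps)
  finally show ?thesis .
qed

definition largest_gap_count :: "nat \<Rightarrow> nat \<Rightarrow> nat" where
  "largest_gap_count g k = (\<Sum>A\<in>calA_nat k. \<Sum>j\<le>k - sumset_count k A.
     ((k - sumset_count k A) choose j) * fib (g + card A - (2 * k + 1 + j)))"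

lemma sum_gap_completion_count:
  assumes k: "1 \<le> k"
  shows "(\<Sum>m\<in>{k + 1..g + 1}. \<Sum>A\<in>residue_sets m. gap_completion_count g m A k) = largest_gap_count g k"
proof -
  let ?h = "\<lambda>m A i. if 2 * m \<le> g + card A + i then (k - sumset_count k A) choose (g + card A + i - 2 * m) else 0"
  have "(\<Sum>m\<in>{k + 1..g + 1}. \<Sum>A\<in>residue_sets m. gap_completion_count g m A k)
      = (\<Sum>m\<in>{k + 1..g + 1}. \<Sum>A\<in>calA_nat k. \<Sum>X\<in>Pow {k<..<m}. ?h m A (card X))"
    using k by (intro sum.cong refl sum_residue_sets_split) auto
  also have "\<dots> = (\<Sum>m\<in>{k + 1..g + 1}. \<Sum>A\<in>calA_nat k. \<Sum>i\<le>m - 1 - k. ((m - 1 - k) choose i) * ?h m A i)"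
  proof (intro sum.cong refl)
    fix m A
    show "(\<Sum>X\<in>Pow {k<..<m}. ?h m A (card X)) = (\<Sum>i\<le>m - 1 - k. ((m - 1 - k) choose i) * ?h m A i)"
      using sum_Pow_card[of "{k<..<m}" "?h m A"] by simp
  qed
  also have "\<dots> = (\<Sum>A\<in>calA_nat k. \<Sum>m\<in>{k + 1..g + 1}. \<Sum>i\<le>m - 1 - k. ((m - 1 - k) choose i) * ?h m A i)"
    by (rule sum.swap)
  also have "\<dots> = largest_gap_count g k"
    unfolding largest_gap_count_def
  proof (rule sum.cong[OF refl])
    fix A assume "A \<in> calA_nat k"
    then have "card A \<le> k" using card_mono[of "{..<k}" A] unfolding calA_nat_def by auto
    then show "(\<Sum>m\<in>{k + 1..g + 1}. \<Sum>i\<le>m - 1 - k. ((m - 1 - k) choose i) * ?h m A i)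
        = (\<Sum>j\<le>k - sumset_count k A. ((k - sumset_count k A) choose j) * fib (g + card A - (2 * k + 1 + j)))"
      using k by (intro sum_binomial_products_eq_fib)
  qed
  finally show ?thesis .
qed

lemma card_admissible_triples_eq:
  assumes g: "1 \<le> g"
  shows "card (admissible_triples g) = fib (g + 1) + (\<Sum>k\<in>{1..g}. largest_gap_count g k)"
proof -
  let ?full = "\<lambda>m A. if (m - 1) + (m - card A) = g then 1 else 0::nat"
  have "card (admissible_triples g)
      = (\<Sum>m\<in>{2..g + 1}. \<Sum>A\<in>residue_sets m. ?full m A + (\<Sum>k\<in>{1..<m}. gap_completion_count g m A k))"
    unfolding card_admissible_triples by (intro sum.cong refl card_completions) auto
  also have "\<dots> = (\<Sum>m\<in>{2..g + 1}. \<Sum>A\<in>residue_sets m. ?full m A)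
      + (\<Sum>m\<in>{2..g + 1}. \<Sum>A\<in>residue_sets m. \<Sum>k\<in>{1..<m}. gap_completion_count g m A k)"
    by (simp only: sum.distrib)
  also have "(\<Sum>m\<in>{2..g + 1}. \<Sum>A\<in>residue_sets m. ?full m A) = fib (g + 1)"
    by (rule sum_full_completions_eq_fib[OF g])
  also have "(\<Sum>m\<in>{2..g + 1}. \<Sum>A\<in>residue_sets m. \<Sum>k\<in>{1..<m}. gap_completion_count g m A k)
      = (\<Sum>m\<in>{2..g + 1}. \<Sum>k\<in>{1..<m}. \<Sum>A\<in>residue_sets m. gap_completion_count g m A k)"
    by (intro sum.cong refl sum.swap)
  also have "(\<Sum>m\<in>{2..g + 1}. \<Sum>k\<in>{1..<m}. \<Sum>A\<in>residue_sets m. gap_completion_count g m A k)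
      = (\<Sum>k\<in>{1..g}. \<Sum>m\<in>{k + 1..g + 1}. \<Sum>A\<in>residue_sets m. gap_completion_count g m A k)"
  proof -
    have "(\<Sum>m\<in>{2..g + 1}. \<Sum>k\<in>{1..<m}. \<Sum>A\<in>residue_sets m. gap_completion_count g m A k)
        = (\<Sum>m\<in>{2..g + 1}. \<Sum>k\<in>{k\<in>{1..g}. k < m}. \<Sum>A\<in>residue_sets m. gap_completion_count g m A k)"
      by (intro sum.cong refl) auto
    also have "\<dots> = (\<Sum>k\<in>{1..g}. \<Sum>m\<in>{m\<in>{2..g + 1}. k < m}. \<Sum>A\<in>residue_sets m. gap_completion_count g m A k)"
      by (rule sum.swap_restrict) auto
    also have "\<dots> = (\<Sum>k\<in>{1..g}. \<Sum>m\<in>{k + 1..g + 1}. \<Sum>A\<in>residue_sets m. gap_completion_count g m A k)"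
      by (intro sum.cong refl) auto
    finally show ?thesis .
  qed
  also have "\<dots> = (\<Sum>k\<in>{1..g}. largest_gap_count g k)"
    by (intro sum.cong refl sum_gap_completion_count) simp
  finally show ?thesis .
qed

section \<open>Asymptotics\<close>

lemma largest_gap_count_eq_0: "g < k \<Longrightarrow> largest_gap_count g k = 0"
  unfolding largest_gap_count_def
proof (intro sum.neutral ballI)
  fix A j assume "g < k" "A \<in> calA_nat k"
  then have "g + card A - (2 * k + 1 + j) = 0" using card_mono[of "{..<k}" A] unfolding calA_nat_def by auto
  then show "((k - sumset_count k A) choose j) * fib (g + card A - (2 * k + 1 + j)) = 0" by simp
qed

lemma t_count_eq:
  assumes "1 \<le> g"
  shows "t_count g = fib (g + 1) + (\<Sum>k\<in>{1..g}. largest_gap_count g k)"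
  using assms by (simp add: t_count_eq_card_admissible_triples card_admissible_triples_eq)

context
  fixes \<phi> :: real
  defines \<phi>_def: "\<phi> \<equiv> (1 + sqrt 5) / 2"
begin

lemma golden_ratio_ge: "1618/1000 \<le> \<phi>"
proof -
  have "2236/1000 < sqrt 5" by (rule real_less_rsqrt) (simp add: power2_eq_square)
  then show ?thesis unfolding \<phi>_def by simp
qed

lemma golden_ratio_pos: "0 < \<phi>"
  using golden_ratio_ge by simp

lemma golden_ratio_square: "\<phi>\<^sup>2 = \<phi> + 1"
  unfolding \<phi>_def by (simp add: power2_eq_square field_simps)

lemma inverse_golden_ratio_plus_1: "inverse \<phi> + 1 = \<phi>"
  using golden_ratio_square golden_ratio_pos by (simp add: power2_eq_square field_simps)

lemma inverse_golden_ratio_le: "inverse \<phi> \<le> 6181/10000"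
proof -
  have "inverse \<phi> \<le> inverse (1618/1000)"
    using golden_ratio_ge by (intro le_imp_inverse_le) auto
  then show ?thesis by simp
qed

lemma fib_le_golden_ratio_power: "real (fib n) \<le> \<phi> ^ n * inverse \<phi>"
proof (induction n rule: fib.induct)
  case 1
  then show ?case using golden_ratio_pos by simp
next
  case 2
  then show ?case using golden_ratio_pos by simp
next
  case (3 n)
  have "real (fib (Suc (Suc n))) = real (fib (Suc n)) + real (fib n)" by simp
  also have "\<dots> \<le> \<phi> ^ n * inverse \<phi> * (\<phi> + 1)" using 3 by (simp add: algebra_simps)
  also have "\<dots> = \<phi> ^ Suc (Suc n) * inverse \<phi>"
    by (simp add: golden_ratio_square[symmetric] power2_eq_square)
  finally show ?case .
qed

lemma fib_times_inverse_golden_power_tendsto: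
  "(\<lambda>n. real (fib n) * inverse \<phi> ^ n) \<longlonglongrightarrow> 1 / sqrt 5"
proof -
  have "(\<lambda>n. real (fib n) / (\<phi> ^ n / sqrt 5) * (1 / sqrt 5)) \<longlonglongrightarrow> 1 * (1 / sqrt 5)"
    using fib_asymptotics unfolding \<phi>_def by (intro tendsto_mult tendsto_const) simp
  moreover have "real (fib n) / (\<phi> ^ n / sqrt 5) * (1 / sqrt 5) = real (fib n) * inverse \<phi> ^ n" for n
    using golden_ratio_pos by (simp add: field_simps power_inverse)
  ultimately show ?thesis by simp
qed

lemma fib_shift_times_inverse_golden_power_tendsto:
  "(\<lambda>g. real (fib (g + p - r)) * inverse \<phi> ^ g) \<longlonglongrightarrow> \<phi> ^ p * inverse \<phi> ^ r / sqrt 5"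
proof (rule LIMSEQ_offset[where k = r])
  have "(\<lambda>h. real (fib (h + p)) * inverse \<phi> ^ (h + p) * (\<phi> ^ p * inverse \<phi> ^ r))
      \<longlonglongrightarrow> 1 / sqrt 5 * (\<phi> ^ p * inverse \<phi> ^ r)"
    using LIMSEQ_ignore_initial_segment[OF fib_times_inverse_golden_power_tendsto, of p]
    by (intro tendsto_mult tendsto_const) simp
  moreover have "inverse \<phi> ^ (h + p) * (\<phi> ^ p * inverse \<phi> ^ r) = inverse \<phi> ^ (h + r)" for h
    using golden_ratio_pos by (simp add: power_add field_simps power_inverse)
  ultimately show "(\<lambda>h. real (fib (h + r + p - r)) * inverse \<phi> ^ (h + r))
      \<longlonglongrightarrow> \<phi> ^ p * inverse \<phi> ^ r / sqrt 5"
    by (simp add: mult.assoc)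
qed

lemma fib_shift_times_inverse_golden_power_le:
  "real (fib (g + p - r)) * inverse \<phi> ^ g \<le> \<phi> ^ p * inverse \<phi> ^ (r + 1)"
proof (cases "r \<le> g + p")
  case True
  have "real (fib (g + p - r)) * inverse \<phi> ^ g \<le> \<phi> ^ (g + p - r) * inverse \<phi> * inverse \<phi> ^ g"
    by (rule mult_right_mono[OF fib_le_golden_ratio_power]) (use golden_ratio_pos in simp)
  also have "\<phi> ^ (g + p - r) = \<phi> ^ (g + p) * inverse \<phi> ^ r"
    using True golden_ratio_pos by (simp add: power_diff power_inverse field_simps)
  finally show ?thesis
    using golden_ratio_pos by (simp add: power_add field_simps power_inverse)
next
  case False
  then show ?thesis using golden_ratio_pos by simp
qed


lemma golden_ratio_powr_minus: "\<phi> powr (- real n) = inverse \<phi> ^ n"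
  using powr_realpow[OF golden_ratio_pos, of n] by (simp add: powr_minus power_inverse)

lemma sum_calA_powr_eq_calA_weight_sum:
  "(\<Sum>A\<in>calA k. \<phi> powr (- real (card (sumset A \<inter> {0..int k})) + real (card A) - real k - 1))
    = calA_weight_sum (inverse \<phi>) k"
proof -
  have inj: "inj_on (\<lambda>A. int ` A) (calA_nat k)"
    by (rule inj_onI) (simp add: inj_image_eq_iff[OF inj_of_nat])
  have "\<phi> powr (- real (sumset_count k A) + real (card A) - real k - 1)
      = inverse \<phi> ^ (sumset_count k A - card A + (k + 1))" if "A \<in> calA_nat k" for A
  proof -
    have "- real (sumset_count k A) + real (card A) - real k - 1 = - real (sumset_count k A - card A + (k + 1))"
      using card_le_sumset_count[OF that] by (simp add: of_nat_diff)
    then show ?thesis by (simp only: golden_ratio_powr_minus)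
  qed
  moreover have "card (int ` A) = card A" for A by (simp add: card_image)
  ultimately show ?thesis
    unfolding calA_eq_image_calA_nat calA_weight_sum_def sum.reindex[OF inj] comp_def
      card_sumset_image_int by (intro sum.cong) simp_all
qed

lemma binomial_sum_golden_power:
  assumes A: "A \<in> calA_nat k"
  shows "(\<Sum>j\<le>k - sumset_count k A. real ((k - sumset_count k A) choose j) * (\<phi> ^ card A * inverse \<phi> ^ (2 * k + 1 + j)))
       = inverse \<phi> ^ (sumset_count k A - card A + (k + 1))"
proof -
  let ?q = "inverse \<phi>" and ?s = "sumset_count k A" and ?a = "card A"
  have as: "?a \<le> ?s" by (rule card_le_sumset_count[OF A])
  have sk: "?s \<le> k" by (rule sumset_count_le[OF A])
  have "(\<Sum>j\<le>k - ?s. real ((k - ?s) choose j) * (\<phi> ^ ?a * ?q ^ (2 * k + 1 + j)))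
      = \<phi> ^ ?a * ?q ^ (2 * k + 1) * (\<Sum>j\<le>k - ?s. real ((k - ?s) choose j) * ?q ^ j * 1 ^ (k - ?s - j))"
    by (simp add: sum_distrib_left power_add algebra_simps)
  also have "(\<Sum>j\<le>k - ?s. real ((k - ?s) choose j) * ?q ^ j * 1 ^ (k - ?s - j)) = (?q + 1) ^ (k - ?s)"
    by (rule binomial_ring[symmetric])
  also have "?q + 1 = \<phi>" by (rule inverse_golden_ratio_plus_1)
  also have "\<phi> ^ ?a * ?q ^ (2 * k + 1) * \<phi> ^ (k - ?s) = (\<phi> * ?q) ^ (?a + (k - ?s)) * ?q ^ (?s - ?a + (k + 1))"
  proof -
    have e: "2 * k + 1 = (?a + (k - ?s)) + (?s - ?a + (k + 1))" using as sk by simp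
    show ?thesis unfolding e power_add power_mult_distrib by (simp add: algebra_simps)
  qed
  also have "\<dots> = ?q ^ (?s - ?a + (k + 1))" using golden_ratio_pos by simp
  finally show ?thesis .
qed

lemma largest_gap_count_times_power:
  "real (largest_gap_count g k) * inverse \<phi> ^ g = (\<Sum>A\<in>calA_nat k. \<Sum>j\<le>k - sumset_count k A.
     real ((k - sumset_count k A) choose j) * (real (fib (g + card A - (2 * k + 1 + j))) * inverse \<phi> ^ g))"
  unfolding largest_gap_count_def of_nat_sum of_nat_mult sum_distrib_right mult.assoc ..

lemma largest_gap_count_tendsto:
  "(\<lambda>g. real (largest_gap_count g k) * inverse \<phi> ^ g) \<longlonglongrightarrow> calA_weight_sum (inverse \<phi>) k / sqrt 5"
proof -
  have "(\<lambda>g. real (largest_gap_count g k) * inverse \<phi> ^ g) \<longlonglongrightarrow> (\<Sum>A\<in>calA_nat k. \<Sum>j\<le>k - sumset_count k A.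
       real ((k - sumset_count k A) choose j) * (\<phi> ^ card A * inverse \<phi> ^ (2 * k + 1 + j) / sqrt 5))"
    unfolding largest_gap_count_times_power
    by (intro tendsto_sum tendsto_mult tendsto_const fib_shift_times_inverse_golden_power_tendsto)
  also have "(\<Sum>A\<in>calA_nat k. \<Sum>j\<le>k - sumset_count k A.
       real ((k - sumset_count k A) choose j) * (\<phi> ^ card A * inverse \<phi> ^ (2 * k + 1 + j) / sqrt 5))
      = calA_weight_sum (inverse \<phi>) k / sqrt 5"
    unfolding calA_weight_sum_def sum_divide_distrib
    by (intro sum.cong refl)
      (simp only: times_divide_eq_right sum_divide_distrib[symmetric] binomial_sum_golden_power)
  finally show ?thesis .
qed

lemma largest_gap_count_le:
  "real (largest_gap_count g k) * inverse \<phi> ^ g \<le> inverse \<phi> * calA_weight_sum (inverse \<phi>) k"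
proof -
  have "real (largest_gap_count g k) * inverse \<phi> ^ g \<le> (\<Sum>A\<in>calA_nat k. \<Sum>j\<le>k - sumset_count k A.
       real ((k - sumset_count k A) choose j) * (\<phi> ^ card A * inverse \<phi> ^ (2 * k + 1 + j + 1)))"
    unfolding largest_gap_count_times_power
    by (intro sum_mono mult_left_mono fib_shift_times_inverse_golden_power_le) auto
  also have "\<dots> = inverse \<phi> * calA_weight_sum (inverse \<phi>) k"
    unfolding calA_weight_sum_def sum_distrib_left
  proof (intro sum.cong refl)
    fix A assume A: "A \<in> calA_nat k"
    have "(\<Sum>j\<le>k - sumset_count k A. real ((k - sumset_count k A) choose j) * (\<phi> ^ card A * inverse \<phi> ^ (2 * k + 1 + j + 1)))
        = inverse \<phi> * (\<Sum>j\<le>k - sumset_count k A. real ((k - sumset_count k A) choose j) * (\<phi> ^ card A * inverse \<phi> ^ (2 * k + 1 + j)))"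
      unfolding sum_distrib_left by (intro sum.cong refl) (simp add: algebra_simps)
    then show "(\<Sum>j\<le>k - sumset_count k A. real ((k - sumset_count k A) choose j) * (\<phi> ^ card A * inverse \<phi> ^ (2 * k + 1 + j + 1)))
        = inverse \<phi> * inverse \<phi> ^ (sumset_count k A - card A + (k + 1))"
      by (simp only: binomial_sum_golden_power[OF A])
  qed
  finally show ?thesis .
qed

lemma sum_largest_gap_counts_tendsto:
  "(\<lambda>g. \<Sum>k\<in>{1..g}. real (largest_gap_count g k) * inverse \<phi> ^ g)
    \<longlonglongrightarrow> (\<Sum>n. calA_weight_sum (inverse \<phi>) (n + 1)) / sqrt 5"
proof -
  let ?W = "\<lambda>n. calA_weight_sum (inverse \<phi>) (n + 1)"
  define a where "a n g = real (largest_gap_count g (n + 1)) * inverse \<phi> ^ g" for n g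
  have q: "0 \<le> inverse \<phi>" "inverse \<phi> \<le> 6181/10000" using golden_ratio_pos inverse_golden_ratio_le by auto
  have W: "summable ?W"
    using summable_calA_weight_sum[OF q] by (subst summable_iff_shift) simp
  have lim: "(\<lambda>g. a n g) \<longlonglongrightarrow> ?W n / sqrt 5" for n unfolding a_def by (rule largest_gap_count_tendsto)
  have "\<forall>\<^sub>F (n, g) in sequentially \<times>\<^sub>F sequentially. norm (a n g) \<le> inverse \<phi> * ?W n"
    using largest_gap_count_le golden_ratio_pos by (intro always_eventually) (simp add: a_def case_prod_beta)
  from tannerys_theorem[OF lim this summable_mult[OF W]]
  have "(\<lambda>g. \<Sum>n. a n g) \<longlonglongrightarrow> (\<Sum>n. ?W n / sqrt 5)" by simp
  moreover have "(\<Sum>n. a n g) = (\<Sum>k\<in>{1..g}. real (largest_gap_count g k) * inverse \<phi> ^ g)" for g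
  proof -
    have "(\<Sum>n. a n g) = (\<Sum>n<g. a n g)" by (rule suminf_finite) (auto simp: a_def largest_gap_count_eq_0)
    also have "\<dots> = (\<Sum>k\<in>{1..g}. real (largest_gap_count g k) * inverse \<phi> ^ g)"
      unfolding a_def by (rule sum.reindex_bij_witness[of _ "\<lambda>k. k - 1" "\<lambda>n. n + 1"]) auto
    finally show ?thesis .
  qed
  ultimately show ?thesis using suminf_divide[OF W, of "sqrt 5"] by simp
qed

end

theorem theorem3p11:
  defines "\<phi> \<equiv> (1 + sqrt 5) / 2"
  defines "T \<equiv> (\<lambda>k::nat. \<Sum>A\<in>calA k.
              \<phi> powr (- real (card (sumset A \<inter> {0..int k})) + real (card A) - real k - 1))"
  shows "summable (\<lambda>n. T (n + 1)) \<and>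
         (\<lambda>g. real (t_count g) * \<phi> powr (- real g)) \<longlonglongrightarrow>
           \<phi> / sqrt 5 + (1 / sqrt 5) * (\<Sum>n. T (n + 1))"
proof -
  let ?q = "inverse \<phi>"
  have T: "T k = calA_weight_sum ?q k" for k
    unfolding T_def \<phi>_def by (rule sum_calA_powr_eq_calA_weight_sum)
  have "summable (\<lambda>n. T (n + 1))"
    using summable_calA_weight_sum[OF _ inverse_golden_ratio_le] golden_ratio_pos unfolding T \<phi>_def
    by (subst summable_iff_shift) simp
  moreover have "(\<lambda>g. real (fib (g + 1)) * ?q ^ g + (\<Sum>k\<in>{1..g}. real (largest_gap_count g k) * ?q ^ g))
      \<longlonglongrightarrow> \<phi> / sqrt 5 + (\<Sum>n. T (n + 1)) / sqrt 5"
    using fib_shift_times_inverse_golden_power_tendsto[of 1 0] sum_largest_gap_counts_tendsto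
    unfolding T \<phi>_def by (intro tendsto_add) simp_all
  moreover have "\<forall>\<^sub>F g in sequentially. real (fib (g + 1)) * ?q ^ g + (\<Sum>k\<in>{1..g}. real (largest_gap_count g k) * ?q ^ g)
      = real (t_count g) * \<phi> powr (- real g)"
    using eventually_ge_at_top[of 1] unfolding \<phi>_def
    by eventually_elim (simp add: t_count_eq golden_ratio_powr_minus sum_distrib_right algebra_simps)
  ultimately show ?thesis using Lim_transform_eventually by fastforce
qed

end
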